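(* Fix $0<\delta\le1$ and assume $h_0\in C_0^\infty(D)$ (extended by $0$ outside $D$). Let $\bar h^{N,\delta}$ be the solution of the discretized equation described in the context with initial data $\bar h^{N,\delta}(0)=\bar h^{N}_0$. Then for every $T>0$, $$\sup_N\sup_{0\le t\le T}\|\nabla^N\bar h^{N,\delta}(t)\|_{L^2(D)}^2<\infty.$$
   Context: Setting: $D\subset\mathbb{R}^d$ is a bounded connected domain with Lipschitz boundary containing the origin, such that for some $C>0$, for all $N$ large, all $z\in\mathbb{Z}^d\setminus(ND\cap\mathbb{Z}^d)$ and all $x,y\in ND\cap\mathbb{Z}^d$ with $|x-z|\le2,|y-z|\le2$, the graph distance in $ND\cap\mathbb{Z}^d$ between $x,y$ is $\le C$. $V:\mathbb{R}\to\mathbb{R}$ is $C^2$, even, $c_-\le V''\le c_+$ with $c_\pm>0$. $\sigma$ is the surface tension of $V$: $\sigma(u)=-\lim_{M\to\infty}M^{-d}\log(Z_M(u)/Z_M(0))$, $Z_M(u)=\int\exp(-\sum_{x\in(\mathbb{Z}/M\mathbb{Z})^d}\sum_{i=1}^dV(\phi(x+e_i)-\phi(x)+u_i))\prod_{x\ne0}d\phi(x)$, $\phi(0)=0$; $\sigma\in C^1$ with $c_-|u-v|^2\le(\nabla\sigma(u)-\nabla\sigma(v))\cdot(u-v)\le c_+|u-v|^2$. $\sigma^\delta=\sigma*\rho_\delta$, $\rho_\delta(u)=\delta^{-d}\rho(u/\delta)$, $\rho\in C_0^\infty$ nonnegative, symmetric, supported in the unit ball, $\int\rho=1$. Discretization: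 $B(\alpha,l)=\prod_i[\alpha_i-l/2,\alpha_i+l/2)$; $D_N=\{x\in ND\cap\mathbb{Z}^d;B(x/N,5/N)\subset D\}$; $\tilde D_N=\bigcup_{x\in D_N}B(x/N,1/N)$. Step functions with mesh $1/N$ are functions constant on each $B(x/N,1/N)$, $x\in\mathbb{Z}^d$. For $f:\mathbb{R}^d\to\mathbb{R}$, $g:\mathbb{R}^d\to\mathbb{R}^d$: $\nabla^N_if(\theta)=N(f(\theta+e_i/N)-f(\theta))$, $\nabla^{N,*}_if(\theta)=-N(f(\theta)-f(\theta-e_i/N))$, $\nabla^Nf=(\nabla^N_1f,\dots,\nabla^N_df)$, $\mathrm{div}_Ng=-\sum_i\nabla^{N,*}_ig_i$, and $\Delta_Nf(\theta)=N\sum_{i=1}^d(\nabla^N_if(\theta)1_{\theta\in\tilde D_N}1_{\theta+e_i/N\in\tilde D_N}-\nabla^N_if(\theta-e_i/N)1_{\theta\in\tilde D_N}1_{\theta-e_i/N\in\tilde D_N})$. The discretized equation is the ODE system for the step function $\bar h^{N,\delta}(t,\cdot)$: $\partial_t\bar h^{N,\delta}(t,\theta)=-\Delta_Nk^{N,\delta}(t,\theta)$, $k^{N,\delta}(t,\theta)=\mathrm{div}_N\{(\nabla\sigma^\delta)(\nabla^N\bar h^{N,\delta}(t))\}(\theta)$ for $\theta\in\tilde D_N$, $\bar h^{N,\delta}(t,\theta)=0$ for $\theta\notin\tilde D_N$, with initial data $\bar h^N_0(\theta)=N^d\int_{B(x/N,1/N)}h_0(\theta')d\theta'$ for $\theta\in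 B(x/N,1/N)$, $x\in\mathbb{Z}^d$. $\|\cdot\|_{L^2(D)}$ of an $\mathbb{R}^d$-valued function is $(\int_D|\cdot|^2)^{1/2}$. *)

theory Defs
  imports "HOL-Analysis.Analysis"
begin

text \<open>C-infinity functions on R^d: differentiable everywhere, with all partial
  derivatives again C-infinity (greatest fixed point).\<close>
coinductive smooth_fun :: "(real^'d \<Rightarrow> real) \<Rightarrow> bool" where
  "(\<forall>x. f differentiable (at x)) \<Longrightarrow>
   (\<forall>i. smooth_fun (\<lambda>x. frechet_derivative f (at x) (axis i 1))) \<Longrightarrow> smooth_fun f"

definition grad :: "(real^'d \<Rightarrow> real) \<Rightarrow> real^'d \<Rightarrow> real^'d" where
  "grad f u = (\<chi> i. frechet_derivative f (at u) (axis i 1))"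

text \<open>Lipschitz boundary: locally, after an orthogonal change of coordinates,
  D is the subgraph of a Lipschitz function of the other d-1 coordinates.\<close>
definition lipschitz_boundary :: "(real^'d) set \<Rightarrow> bool" where
  "lipschitz_boundary D \<longleftrightarrow>
     (\<forall>p\<in>frontier D. \<exists>r>0. \<exists>(R::real^'d \<Rightarrow> real^'d) (j::'d) (g::real^'d \<Rightarrow> real) L.
        orthogonal_transformation R \<and>
        L-lipschitz_on UNIV g \<and>
        (\<forall>y. g y = g (\<chi> k. if k = j then 0 else y $ k)) \<and>
        (\<forall>x\<in>ball p r. x \<in> D \<longleftrightarrow> (R (x - p)) $ j < g (R (x - p))))"

definition lattice :: "(real^'d) set" where
  "lattice = {x. \<forall>i. x $ i \<in> \<int>}"

definition scaled_lattice :: "nat \<Rightarrow> (real^'d) set \<Rightarrow> (real^'d) set" where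
  "scaled_lattice N D = {x \<in> lattice. x \<in> (\<lambda>y. real N *\<^sub>R y) ` D}"

definition lattice_path :: "(real^'d) set \<Rightarrow> real^'d \<Rightarrow> real^'d \<Rightarrow> nat \<Rightarrow> bool" where
  "lattice_path S x y n \<longleftrightarrow> (\<exists>p :: nat \<Rightarrow> real^'d. p 0 = x \<and> p n = y \<and>
      (\<forall>k\<le>n. p k \<in> S) \<and> (\<forall>k<n. norm (p (Suc k) - p k) = 1))"

definition graph_dist_le :: "(real^'d) set \<Rightarrow> real^'d \<Rightarrow> real^'d \<Rightarrow> real \<Rightarrow> bool" where
  "graph_dist_le S x y C \<longleftrightarrow> (\<exists>n. real n \<le> C \<and> lattice_path S x y n)"

definition admissible_domain :: "(real^'d) set \<Rightarrow> bool" where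
  "admissible_domain D \<longleftrightarrow> open D \<and> connected D \<and> bounded D \<and> D \<noteq> {} \<and>
     lipschitz_boundary D \<and> 0 \<in> D \<and>
     (\<exists>C>0. \<exists>N0. \<forall>N\<ge>N0. \<forall>z \<in> lattice - scaled_lattice N D.
        \<forall>x\<in>scaled_lattice N D. \<forall>y\<in>scaled_lattice N D.
          norm (x - z) \<le> 2 \<longrightarrow> norm (y - z) \<le> 2 \<longrightarrow> graph_dist_le (scaled_lattice N D) x y C)"

text \<open>The discrete torus (Z/MZ)^d, represented by representatives in [0,M)^d.\<close>
definition torus :: "nat \<Rightarrow> (int^'d) set" where
  "torus M = {x. \<forall>i. 0 \<le> x $ i \<and> x $ i < int M}"

definition tshift :: "nat \<Rightarrow> int^'d \<Rightarrow> 'd \<Rightarrow> int^'d" where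
  "tshift M x i = (\<chi> j. if j = i then (x $ j + 1) mod int M else x $ j)"

definition hamiltonian :: "(real \<Rightarrow> real) \<Rightarrow> nat \<Rightarrow> real^'d \<Rightarrow> (int^'d \<Rightarrow> real) \<Rightarrow> real" where
  "hamiltonian V M u \<phi> = (\<Sum>x\<in>torus M. \<Sum>i\<in>UNIV. V (\<phi> (tshift M x i) - \<phi> x + u $ i))"

definition partition_fn :: "(real \<Rightarrow> real) \<Rightarrow> nat \<Rightarrow> real^'d \<Rightarrow> real" where
  "partition_fn V M u = (integral\<^sup>L (PiM (torus M - {0}) (\<lambda>_. lborel))
      (\<lambda>\<phi>. exp (- hamiltonian V M u (\<lambda>x. if x = 0 then 0 else \<phi> x))))"

definition surface_tension :: "(real \<Rightarrow> real) \<Rightarrow> real^'d \<Rightarrow> real" where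
  "surface_tension V u = - lim (\<lambda>M. (1 / real M ^ CARD('d)) *
       ln (partition_fn V M u / partition_fn V M (0::real^'d)))"

definition rho_delta :: "(real^'d \<Rightarrow> real) \<Rightarrow> real \<Rightarrow> real^'d \<Rightarrow> real" where
  "rho_delta \<rho> \<delta> u = (1 / \<delta> ^ CARD('d)) * \<rho> ((1 / \<delta>) *\<^sub>R u)"

definition sigma_delta :: "(real\<Rightarrow>real) \<Rightarrow> (real^'d \<Rightarrow> real) \<Rightarrow> real \<Rightarrow> real^'d \<Rightarrow> real" where
  "sigma_delta V \<rho> \<delta> u = integral UNIV (\<lambda>v. surface_tension V (u - v) * rho_delta \<rho> \<delta> v)"

definition cube :: "real^'d \<Rightarrow> real \<Rightarrow> (real^'d) set" where
  "cube \<alpha> l = {\<theta>. \<forall>i. \<alpha> $ i - l/2 \<le> \<theta> $ i \<and> \<theta> $ i < \<alpha> $ i + l/2}"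

definition DN :: "nat \<Rightarrow> (real^'d) set \<Rightarrow> (real^'d) set" where
  "DN N D = {x \<in> scaled_lattice N D. cube ((1 / real N) *\<^sub>R x) (5 / real N) \<subseteq> D}"

definition tDN :: "nat \<Rightarrow> (real^'d) set \<Rightarrow> (real^'d) set" where
  "tDN N D = (\<Union>x\<in>DN N D. cube ((1 / real N) *\<^sub>R x) (1 / real N))"

definition step_fun :: "nat \<Rightarrow> (real^'d \<Rightarrow> real) \<Rightarrow> bool" where
  "step_fun N f \<longleftrightarrow> (\<forall>x\<in>lattice. \<forall>\<theta>\<in>cube ((1 / real N) *\<^sub>R x) (1 / real N).
       f \<theta> = f ((1 / real N) *\<^sub>R x))"

definition nablaN_i :: "nat \<Rightarrow> 'd \<Rightarrow> (real^'d \<Rightarrow> real) \<Rightarrow> real^'d \<Rightarrow> real" where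
  "nablaN_i N i f \<theta> = real N * (f (\<theta> + (1 / real N) *\<^sub>R axis i 1) - f \<theta>)"

definition nablaN :: "nat \<Rightarrow> (real^'d \<Rightarrow> real) \<Rightarrow> real^'d \<Rightarrow> real^'d" where
  "nablaN N f \<theta> = (\<chi> i. nablaN_i N i f \<theta>)"

definition nablaN_star_i :: "nat \<Rightarrow> 'd \<Rightarrow> (real^'d \<Rightarrow> real) \<Rightarrow> real^'d \<Rightarrow> real" where
  "nablaN_star_i N i f \<theta> = - real N * (f \<theta> - f (\<theta> - (1 / real N) *\<^sub>R axis i 1))"

definition divN :: "nat \<Rightarrow> (real^'d \<Rightarrow> real^'d) \<Rightarrow> real^'d \<Rightarrow> real" where
  "divN N g \<theta> = - (\<Sum>i\<in>UNIV. nablaN_star_i N i (\<lambda>\<eta>. g \<eta> $ i) \<theta>)"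

definition ind :: "bool \<Rightarrow> real" where
  "ind b = (if b then 1 else 0)"

definition LapN :: "nat \<Rightarrow> (real^'d) set \<Rightarrow> (real^'d \<Rightarrow> real) \<Rightarrow> real^'d \<Rightarrow> real" where
  "LapN N D f \<theta> = real N * (\<Sum>i\<in>UNIV.
      nablaN_i N i f \<theta> * ind (\<theta> \<in> tDN N D) * ind (\<theta> + (1 / real N) *\<^sub>R axis i 1 \<in> tDN N D)
    - nablaN_i N i f (\<theta> - (1 / real N) *\<^sub>R axis i 1) * ind (\<theta> \<in> tDN N D)
        * ind (\<theta> - (1 / real N) *\<^sub>R axis i 1 \<in> tDN N D))"

definition kN :: "(real\<Rightarrow>real) \<Rightarrow> (real^'d \<Rightarrow> real) \<Rightarrow> real \<Rightarrow> nat \<Rightarrow> (real^'d \<Rightarrow> real) \<Rightarrow> real^'d \<Rightarrow> real" where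
  "kN V \<rho> \<delta> N f = divN N (\<lambda>\<eta>. grad (sigma_delta V \<rho> \<delta>) (nablaN N f \<eta>))"

definition discrete_solution ::
  "(real\<Rightarrow>real) \<Rightarrow> (real^'d \<Rightarrow> real) \<Rightarrow> real \<Rightarrow> (real^'d) set \<Rightarrow> (real^'d \<Rightarrow> real)
     \<Rightarrow> nat \<Rightarrow> (real \<Rightarrow> real^'d \<Rightarrow> real) \<Rightarrow> bool" where
  "discrete_solution V \<rho> \<delta> D h0 N h \<longleftrightarrow>
     (\<forall>t\<ge>0. step_fun N (h t)) \<and>
     (\<forall>x\<in>lattice. \<forall>\<theta>\<in>cube ((1 / real N) *\<^sub>R x) (1 / real N). \<theta> \<in> tDN N D \<longrightarrow>
        h 0 \<theta> = real N ^ CARD('d) * integral (cube ((1 / real N) *\<^sub>R x) (1 / real N)) h0) \<and>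
     (\<forall>t\<ge>0. \<forall>\<theta>. \<theta> \<notin> tDN N D \<longrightarrow> h t \<theta> = 0) \<and>
     (\<forall>t\<ge>0. \<forall>\<theta>\<in>tDN N D.
        ((\<lambda>s. h s \<theta>) has_real_derivative (- LapN N D (kN V \<rho> \<delta> N (h t)) \<theta>)) (at t within {0..}))"

end

theory Submission
  imports Defs
begin

text \<open>The Bregman divergence \<open>\<psi>(u) = \<sigma>\<^sup>\<delta>(u) - \<sigma>\<^sup>\<delta>(0) - \<nabla>\<sigma>\<^sup>\<delta>(0)\<cdot>u\<close> of the mollified
  surface tension is comparable to \<open>|u|\<^sup>2\<close> from both sides, since convolution with \<open>\<rho>\<^sub>\<delta>\<close> preserves
  the bounds \<open>c\<^sub>-|u-v|\<^sup>2 \<le> (\<nabla>\<sigma>(u)-\<nabla>\<sigma>(v))\<cdot>(u-v) \<le> c\<^sub>+|u-v|\<^sup>2\<close>. Along the discretised flow the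
  energy \<open>\<Sum>\<^sub>x \<psi>(\<nabla>\<^sup>N h(t,x))\<close> is nonincreasing: by summation by parts its derivative is
  \<open>\<Sum> k \<Delta>\<^sub>N k \<le> 0\<close>. Hence \<open>\<parallel>\<nabla>\<^sup>N h(t)\<parallel>\<^sup>2 \<le> (c\<^sub>+/c\<^sub>-) \<parallel>\<nabla>\<^sup>N h(0)\<parallel>\<^sup>2\<close>, and the initial discrete
  gradient is bounded uniformly in \<open>N\<close>: the difference quotients of cell averages of the smooth,
  compactly supported \<open>h\<^sub>0\<close> are bounded by its Lipschitz constant.\<close>

lemma frechet_derivative_eq_grad:
  fixes f :: "real^'d \<Rightarrow> real"
  assumes "f differentiable (at u)"
  shows "frechet_derivative f (at u) = (\<lambda>h. grad f u \<bullet> h)"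
proof
  fix h :: "real^'d"
  have lin: "linear (frechet_derivative f (at u))"
    using assms frechet_derivative_works has_derivative_linear by blast
  have "frechet_derivative f (at u) h = frechet_derivative f (at u) (\<Sum>i\<in>UNIV. h$i *\<^sub>R axis i 1)"
    using basis_expansion[of h] by (simp add: scalar_mult_eq_scaleR)
  also have "\<dots> = (\<Sum>i\<in>UNIV. h$i * frechet_derivative f (at u) (axis i 1))"
    using lin by (simp add: linear_sum linear_scale)
  also have "\<dots> = grad f u \<bullet> h"
    by (simp add: grad_def inner_vec_def mult.commute)
  finally show "frechet_derivative f (at u) h = grad f u \<bullet> h" .
qed

lemma has_derivative_grad:
  fixes f :: "real^'d \<Rightarrow> real"
  assumes "f differentiable (at u)"
  shows "(f has_derivative (\<lambda>h. grad f u \<bullet> h)) (at u)"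
  using assms frechet_derivative_works frechet_derivative_eq_grad by metis

lemma has_real_derivative_along_line:
  fixes f :: "real^'d \<Rightarrow> real"
  assumes "f differentiable (at (v + s *\<^sub>R w))"
  shows "((\<lambda>s. f (v + s *\<^sub>R w)) has_real_derivative grad f (v + s *\<^sub>R w) \<bullet> w) (at s)"
proof -
  have "((\<lambda>s. v + s *\<^sub>R w) has_derivative (\<lambda>r. r *\<^sub>R w)) (at s)"
    by (auto intro!: derivative_eq_intros)
  from has_derivative_compose[OF this has_derivative_grad[OF assms]]
  have "((\<lambda>s. f (v + s *\<^sub>R w)) has_derivative (\<lambda>r. r * (grad f (v + s *\<^sub>R w) \<bullet> w))) (at s)"
    by (simp add: o_def)
  then show ?thesis
    by (simp add: has_field_derivative_def mult.commute[of _ "grad f (v + s *\<^sub>R w) \<bullet> w"])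
qed

lemma has_derivative_of_quadratic_remainder:
  fixes f :: "'a::real_normed_vector \<Rightarrow> 'b::real_normed_vector"
  assumes "bounded_linear L"
    and rem: "\<And>y. norm (f y - f v - L (y - v)) \<le> C * (norm (y - v))\<^sup>2"
  shows "(f has_derivative L) (at v)"
  unfolding has_derivative_at_alt
proof (intro conjI allI impI assms(1))
  fix e :: real assume e: "e > 0"
  show "\<exists>d>0. \<forall>y. norm (y - v) < d \<longrightarrow> norm (f y - f v - L (y - v)) \<le> e * norm (y - v)"
  proof (intro exI[of _ "e / (\<bar>C\<bar> + 1)"] conjI allI impI)
    show "e / (\<bar>C\<bar> + 1) > 0" using e by simp
    fix y assume y: "norm (y - v) < e / (\<bar>C\<bar> + 1)"
    have "C * (norm (y - v))\<^sup>2 \<le> (\<bar>C\<bar> + 1) * (norm (y - v))\<^sup>2"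
      by (intro mult_right_mono) auto
    also have "\<dots> = ((\<bar>C\<bar> + 1) * norm (y - v)) * norm (y - v)"
      by (simp add: power2_eq_square)
    also have "\<dots> \<le> e * norm (y - v)"
      using y by (intro mult_right_mono) (simp_all add: field_simps)
    finally show "norm (f y - f v - L (y - v)) \<le> e * norm (y - v)"
      using rem[of y] by linarith
  qed
qed

lemma DERIV_increment_ge:
  fixes \<phi> \<phi>' :: "real \<Rightarrow> real"
  assumes deriv: "\<And>s. (\<phi> has_real_derivative \<phi>' s) (at s)"
    and ge: "\<And>s. 0 < s \<Longrightarrow> s < 1 \<Longrightarrow> a * s \<le> \<phi>' s - \<phi>' 0"
  shows "a / 2 \<le> \<phi> 1 - \<phi> 0 - \<phi>' 0"
proof -
  define L where "L s = \<phi> s - \<phi>' 0 * s - a / 2 * s\<^sup>2" for s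
  have dL: "(L has_real_derivative \<phi>' s - \<phi>' 0 - a * s) (at s)" for s
    unfolding L_def by (auto intro!: derivative_eq_intros deriv simp: power2_eq_square)
  have "L 0 \<le> L 1"
  proof (rule DERIV_nonneg_imp_increasing_open[of 0 1 L])
    fix s :: real assume "0 < s" "s < 1"
    then show "\<exists>y. (L has_real_derivative y) (at s) \<and> 0 \<le> y"
      using dL[of s] ge[of s] by (intro exI[of _ "\<phi>' s - \<phi>' 0 - a * s"]) auto
  next
    show "continuous_on {0..1} L"
      using dL by (meson DERIV_isCont continuous_at_imp_continuous_on)
  qed simp
  then show ?thesis by (simp add: L_def)
qed

lemma bregman_quadratic_bounds:
  fixes f :: "real^'d \<Rightarrow> real"
  assumes diff: "\<forall>u. f differentiable (at u)"
    and mono: "\<forall>u v. cm * (norm (u - v))\<^sup>2 \<le> (grad f u - grad f v) \<bullet> (u - v)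
        \<and> (grad f u - grad f v) \<bullet> (u - v) \<le> cp * (norm (u - v))\<^sup>2"
  shows "cm/2 * (norm (u - v))\<^sup>2 \<le> f u - f v - grad f v \<bullet> (u - v)
       \<and> f u - f v - grad f v \<bullet> (u - v) \<le> cp/2 * (norm (u - v))\<^sup>2"
proof -
  define w where "w = u - v"
  define \<phi>' where "\<phi>' s = grad f (v + s *\<^sub>R w) \<bullet> w" for s
  have deriv: "((\<lambda>s. f (v + s *\<^sub>R w)) has_real_derivative \<phi>' s) (at s)" for s
    unfolding \<phi>'_def using diff has_real_derivative_along_line by blast
  have slope: "cm * (norm w)\<^sup>2 * s \<le> \<phi>' s - \<phi>' 0 \<and> \<phi>' s - \<phi>' 0 \<le> cp * (norm w)\<^sup>2 * s"
    if "s > 0" for s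
  proof -
    have "cm * (norm (s *\<^sub>R w))\<^sup>2 \<le> (grad f (v + s *\<^sub>R w) - grad f v) \<bullet> (s *\<^sub>R w)
        \<and> (grad f (v + s *\<^sub>R w) - grad f v) \<bullet> (s *\<^sub>R w) \<le> cp * (norm (s *\<^sub>R w))\<^sup>2"
      using mono[rule_format, of "v + s *\<^sub>R w" v] by simp
    then have "s * (cm * (norm w)\<^sup>2 * s) \<le> s * (\<phi>' s - \<phi>' 0)
        \<and> s * (\<phi>' s - \<phi>' 0) \<le> s * (cp * (norm w)\<^sup>2 * s)"
      using that by (simp add: \<phi>'_def power2_eq_square algebra_simps)
    then show ?thesis using that by (simp add: mult_le_cancel_left_pos)
  qed
  have "cm * (norm w)\<^sup>2 / 2 \<le> f (v + 1 *\<^sub>R w) - f (v + 0 *\<^sub>R w) - \<phi>' 0"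
    by (rule DERIV_increment_ge[OF deriv]) (use slope in auto)
  moreover have "- (cp * (norm w)\<^sup>2) / 2 \<le> - f (v + 1 *\<^sub>R w) - - f (v + 0 *\<^sub>R w) - - \<phi>' 0"
    by (rule DERIV_increment_ge[OF DERIV_minus[OF deriv]]) (use slope in fastforce)
  ultimately show ?thesis
    by (simp add: w_def \<phi>'_def)
qed

lemma smooth_fun_differentiable: "smooth_fun f \<Longrightarrow> f differentiable (at x)"
  by (erule smooth_fun.cases) auto

lemma smooth_fun_continuous: "smooth_fun f \<Longrightarrow> continuous_on UNIV f"
  by (meson continuous_at_imp_continuous_on differentiable_imp_continuous_within
      smooth_fun_differentiable)

lemma smooth_fun_partial_derivative:
  "smooth_fun f \<Longrightarrow> smooth_fun (\<lambda>x. frechet_derivative f (at x) (axis i 1))"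
  by (erule smooth_fun.cases) auto

lemma not_in_closure_support_eq_0:
  "x \<notin> closure {x. f x \<noteq> 0} \<Longrightarrow> f x = 0"
  using closure_subset[of "{x. f x \<noteq> 0}"] by auto

lemma bounded_vanishing_outside_compact:
  fixes f :: "'a::topological_space \<Rightarrow> real"
  assumes cont: "continuous_on UNIV f" and K: "compact K" and zero: "\<And>x. x \<notin> K \<Longrightarrow> f x = 0"
  shows "\<exists>M\<ge>0. \<forall>x. \<bar>f x\<bar> \<le> M"
proof -
  have "compact (f ` K)"
    by (rule compact_continuous_image[OF continuous_on_subset[OF cont] K]) simp
  then obtain b where b: "b > 0" "\<forall>y\<in>f ` K. norm y \<le> b"
    using compact_imp_bounded bounded_pos by metis
  have "\<bar>f x\<bar> \<le> b" for x
    using b zero[of x] by (cases "x \<in> K") auto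
  then show ?thesis using b(1) by (intro exI[of _ b]) auto
qed

lemma grad_eq_0_outside_closure_support:
  fixes f :: "real^'d \<Rightarrow> real"
  assumes "y \<notin> closure {x. f x \<noteq> 0}"
  shows "grad f y = 0"
proof -
  define C where "C = closure {x. f x \<noteq> 0}"
  have "open (- C)" unfolding C_def by (intro open_Compl closed_closure)
  moreover have "\<forall>z\<in>- C. 0 = f z" using not_in_closure_support_eq_0 unfolding C_def by fastforce
  ultimately have "(f has_derivative (\<lambda>_. 0)) (at y)"
    using has_derivative_transform_within_open[of "\<lambda>_. 0::real" "\<lambda>_. 0" y UNIV "- C" f] assms
    unfolding C_def[symmetric] by auto
  then have "frechet_derivative f (at y) = (\<lambda>_. 0)" using frechet_derivative_at by metis
  then show ?thesis by (simp add: grad_def vec_eq_iff)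
qed

lemma abs_axis_increment_le:
  fixes f :: "real^'d \<Rightarrow> real"
  assumes diff: "\<And>y. f differentiable (at y)" and bound: "\<And>y. \<bar>grad f y $ i\<bar> \<le> b"
  shows "\<bar>f (x + s *\<^sub>R axis i 1) - f x\<bar> \<le> b * \<bar>s\<bar>"
proof -
  define \<phi> where "\<phi> r = f (x + r *\<^sub>R axis i 1)" for r
  have deriv: "(\<phi> has_real_derivative grad f (x + r *\<^sub>R axis i 1) $ i) (at r)" for r
    using has_real_derivative_along_line[OF diff, where v=x and s=r and w="axis i 1"]
    by (simp add: \<phi>_def[abs_def] inner_axis)
  have "\<bar>\<phi> s - \<phi> 0\<bar> \<le> b * \<bar>s\<bar>"
  proof (cases s "0::real" rule: linorder_cases)
    case less
    then obtain z where "\<phi> 0 - \<phi> s = (0 - s) * grad f (x + z *\<^sub>R axis i 1) $ i"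
      using MVT2[OF less deriv] by blast
    then show ?thesis using bound[of "x + z *\<^sub>R axis i 1"] less
      by (simp add: abs_mult abs_minus_commute mult.commute mult_right_mono)
  next
    case greater
    then obtain z where "\<phi> s - \<phi> 0 = (s - 0) * grad f (x + z *\<^sub>R axis i 1) $ i"
      using MVT2[OF greater deriv] by blast
    then show ?thesis using bound[of "x + z *\<^sub>R axis i 1"] greater
      by (simp add: abs_mult mult.commute mult_right_mono)
  qed simp
  then show ?thesis by (simp add: \<phi>_def)
qed

lemma axis_lipschitz_of_smooth_compact_support:
  fixes f :: "real^'d \<Rightarrow> real"
  assumes smooth: "smooth_fun f" and K: "compact (closure {x. f x \<noteq> 0})"
  shows "\<exists>L. \<forall>x i s. \<bar>f (x + s *\<^sub>R axis i 1) - f x\<bar> \<le> L * \<bar>s\<bar>"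
proof -
  have "\<exists>M\<ge>0. \<forall>y. \<bar>grad f y $ i\<bar> \<le> M" for i
  proof (rule bounded_vanishing_outside_compact[OF _ K])
    show "continuous_on UNIV (\<lambda>y. grad f y $ i)"
      using smooth_fun_continuous[OF smooth_fun_partial_derivative[OF smooth]] by (simp add: grad_def)
  qed (simp add: grad_eq_0_outside_closure_support)
  then obtain M where M: "\<And>i y. \<bar>grad f y $ i\<bar> \<le> M i" "\<And>i. M i \<ge> 0" by metis
  have "\<bar>grad f y $ i\<bar> \<le> (\<Sum>j\<in>UNIV. M j)" for i y
    using M(1)[of y i] member_le_sum[of i UNIV M] M(2) by simp
  then show ?thesis
    using abs_axis_increment_le[OF smooth_fun_differentiable[OF smooth]] by blast
qed

section \<open>The mollified surface tension\<close>

lemma norm_gt_1_outside_cbox: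
  fixes v :: "real^'d"
  assumes "v \<notin> cbox (-1) 1"
  shows "norm v > 1"
proof -
  have "\<not> (\<forall>i. \<bar>v $ i\<bar> \<le> 1)"
    using assms by (auto simp: mem_box_cart abs_le_iff)
  then obtain i where "\<bar>v $ i\<bar> > 1" by (auto simp: not_le)
  then show ?thesis using component_le_norm_cart[of v i] by linarith
qed

lemma rho_delta_eq_0:
  fixes \<rho> :: "real^'d \<Rightarrow> real"
  assumes supp: "closure {v. \<rho> v \<noteq> 0} \<subseteq> cball 0 1" and "0 < \<delta>" "\<delta> < norm v"
  shows "rho_delta \<rho> \<delta> v = 0"
proof -
  have "norm ((1 / \<delta>) *\<^sub>R v) > 1" using assms(2,3) by simp
  then have "\<rho> ((1 / \<delta>) *\<^sub>R v) = 0"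
    using supp not_in_closure_support_eq_0[of "(1 / \<delta>) *\<^sub>R v" \<rho>] by fastforce
  then show ?thesis by (simp add: rho_delta_def)
qed

lemma rho_delta_eq_0_outside_cbox:
  fixes \<rho> :: "real^'d \<Rightarrow> real"
  assumes "closure {v. \<rho> v \<noteq> 0} \<subseteq> cball 0 1" "0 < \<delta>" "\<delta> \<le> 1" "v \<notin> cbox (-1) 1"
  shows "rho_delta \<rho> \<delta> v = 0"
  using norm_gt_1_outside_cbox[OF assms(4)] assms(3) by (intro rho_delta_eq_0[OF assms(1,2)]) simp

lemma has_integral_rho_delta:
  fixes \<rho> :: "real^'d \<Rightarrow> real"
  assumes supp: "closure {v. \<rho> v \<noteq> 0} \<subseteq> cball 0 1" and d: "0 < \<delta>" "\<delta> \<le> 1"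
    and int: "integral UNIV \<rho> = 1"
  shows "(rho_delta \<rho> \<delta> has_integral 1) UNIV"
proof -
  define B where "B = cbox ((-1 - 0) /\<^sub>R (1/\<delta>)) ((1 - 0) /\<^sub>R (1/\<delta>) :: real^'d)"
  have zero: "v \<notin> cbox (-1) 1 \<Longrightarrow> \<rho> v = 0" for v
    using rho_delta_eq_0_outside_cbox[OF supp, of 1 v] by (simp add: rho_delta_def)
  have "\<rho> integrable_on UNIV"
    using int not_integrable_integral by fastforce
  then have "(\<rho> has_integral 1) UNIV"
    using int by (simp add: has_integral_iff)
  then have "((\<lambda>x. if x \<in> cbox (-1) 1 then \<rho> x else 0) has_integral 1) UNIV"
    by (rule has_integral_eq[rotated]) (use zero in auto)
  then have "(\<rho> has_integral 1) (cbox (-1) 1)"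
    by (simp add: has_integral_restrict_UNIV)
  from has_integral_affinity'[OF this, of "1/\<delta>" 0]
  have "((\<lambda>x. \<rho> ((1/\<delta>) *\<^sub>R x + 0)) has_integral 1 /\<^sub>R (1/\<delta>) ^ CARD('d)) B"
    using d by (simp add: B_def)
  from has_integral_mult_right[OF this, of "1 / \<delta> ^ CARD('d)"]
  have "(rho_delta \<rho> \<delta> has_integral 1) B"
    using d by (simp add: rho_delta_def[abs_def] power_one_over)
  then show ?thesis
  proof (rule has_integral_on_superset)
    fix x :: "real^'d" assume x: "x \<notin> B"
    have "(1/\<delta>) *\<^sub>R x \<notin> cbox (-1) 1"
    proof
      assume "(1/\<delta>) *\<^sub>R x \<in> cbox (-1) 1"
      then have "\<forall>i. -1 \<le> x$i / \<delta> \<and> x$i / \<delta> \<le> 1" by (simp add: mem_box_cart)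
      then have "\<forall>i. -\<delta> \<le> x$i \<and> x$i \<le> \<delta>" using d by (simp add: divide_simps)
      then show False using x by (simp add: B_def mem_box_cart)
    qed
    then show "rho_delta \<rho> \<delta> x = 0" using zero by (simp add: rho_delta_def)
  qed simp
qed

lemma integrable_rho_delta_scaleR:
  fixes \<rho> :: "real^'d \<Rightarrow> real" and g :: "real^'d \<Rightarrow> 'b::euclidean_space"
  assumes supp: "closure {v. \<rho> v \<noteq> 0} \<subseteq> cball 0 1" and d: "0 < \<delta>" "\<delta> \<le> 1"
    and "continuous_on UNIV \<rho>" "continuous_on UNIV g"
  shows "(\<lambda>v. rho_delta \<rho> \<delta> v *\<^sub>R g v) integrable_on UNIV"
proof (rule integrable_on_superset)
  have "continuous_on UNIV (rho_delta \<rho> \<delta>)"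
    unfolding rho_delta_def by (intro continuous_intros continuous_on_compose2[OF assms(4)]) auto
  then show "(\<lambda>v. rho_delta \<rho> \<delta> v *\<^sub>R g v) integrable_on cbox (-1) 1"
    by (intro integrable_continuous continuous_intros continuous_on_subset[OF assms(5)])
      (auto intro: continuous_on_subset)
qed (use rho_delta_eq_0_outside_cbox[OF supp d] in auto)

context
  fixes V :: "real \<Rightarrow> real" and \<rho> :: "real^'d \<Rightarrow> real" and \<delta> cm cp :: real
  assumes sigma_diff: "\<forall>u::real^'d. surface_tension V differentiable (at u)"
    and grad_sigma_cont: "continuous_on UNIV (grad (surface_tension V :: real^'d \<Rightarrow> real))"
    and grad_sigma_mono: "\<forall>u v :: real^'d. cm * (norm (u - v))\<^sup>2
          \<le> (grad (surface_tension V) u - grad (surface_tension V) v) \<bullet> (u - v)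
        \<and> (grad (surface_tension V) u - grad (surface_tension V) v) \<bullet> (u - v)
          \<le> cp * (norm (u - v))\<^sup>2"
    and rho_cont: "continuous_on UNIV \<rho>"
    and rho_nonneg: "\<forall>v. 0 \<le> \<rho> v"
    and rho_supp: "closure {v. \<rho> v \<noteq> 0} \<subseteq> cball 0 1"
    and rho_int: "integral UNIV \<rho> = 1"
    and delta: "0 < \<delta>" "\<delta> \<le> 1"
begin

abbreviation (input) \<sigma> :: "real^'d \<Rightarrow> real" where "\<sigma> \<equiv> surface_tension V"

definition mollified_grad :: "real^'d \<Rightarrow> real^'d" where
  "mollified_grad v = integral UNIV (\<lambda>w. rho_delta \<rho> \<delta> w *\<^sub>R grad \<sigma> (v - w))"

lemma integrable_sigma_rho_delta: "(\<lambda>w. \<sigma> (u - w) * rho_delta \<rho> \<delta> w) integrable_on UNIV"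
proof -
  have "continuous_on UNIV \<sigma>"
    using sigma_diff by (meson continuous_at_imp_continuous_on differentiable_imp_continuous_within)
  then have "continuous_on UNIV (\<lambda>w. \<sigma> (u - w))"
    by (rule continuous_on_compose2[OF _ continuous_on_diff[OF continuous_on_const continuous_on_id]]) simp
  then have "(\<lambda>w. rho_delta \<rho> \<delta> w *\<^sub>R \<sigma> (u - w)) integrable_on UNIV"
    by (rule integrable_rho_delta_scaleR[OF rho_supp delta rho_cont])
  then show ?thesis by (simp add: mult.commute)
qed

lemma integrable_grad_sigma_rho_delta:
  "(\<lambda>w. rho_delta \<rho> \<delta> w *\<^sub>R grad \<sigma> (v - w)) integrable_on UNIV"
proof (rule integrable_rho_delta_scaleR[OF rho_supp delta rho_cont])
  show "continuous_on UNIV (\<lambda>w. grad \<sigma> (v - w))"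
    by (rule continuous_on_compose2[OF grad_sigma_cont continuous_on_diff[OF continuous_on_const continuous_on_id]])
      simp
qed

text \<open>Integrate the pointwise bounds for \<open>\<sigma>\<close> at \<open>u - w\<close>, \<open>v - w\<close> against the probability
  density \<open>\<rho>\<^sub>\<delta>(w)\<close>.\<close>
lemma sigma_delta_bregman_bounds_mollified:
  fixes u v :: "real^'d"
  defines "R \<equiv> sigma_delta V \<rho> \<delta> u - sigma_delta V \<rho> \<delta> v - mollified_grad v \<bullet> (u - v)"
  shows "cm/2 * (norm (u - v))\<^sup>2 \<le> R \<and> R \<le> cp/2 * (norm (u - v))\<^sup>2"
proof -
  define r where "r = rho_delta \<rho> \<delta>"
  define q where "q w = (\<sigma> (u - w) - \<sigma> (v - w) - grad \<sigma> (v - w) \<bullet> (u - v)) * r w" for w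
  have r_nonneg: "0 \<le> r w" for w
    using rho_nonneg delta by (simp add: r_def rho_delta_def)
  have int_inner: "(\<lambda>w. (r w *\<^sub>R grad \<sigma> (v - w)) \<bullet> (u - v)) integrable_on UNIV"
    using integrable_linear[OF integrable_grad_sigma_rho_delta bounded_linear_inner_left]
    by (simp add: o_def r_def)
  have q_eq: "q = (\<lambda>w. \<sigma> (u - w) * r w - \<sigma> (v - w) * r w - (r w *\<^sub>R grad \<sigma> (v - w)) \<bullet> (u - v))"
    by (simp add: q_def fun_eq_iff algebra_simps)
  have q_int: "(q has_integral R) UNIV"
  proof -
    have "integral UNIV (\<lambda>w. (r w *\<^sub>R grad \<sigma> (v - w)) \<bullet> (u - v)) = mollified_grad v \<bullet> (u - v)"
      using integral_linear[OF integrable_grad_sigma_rho_delta bounded_linear_inner_left]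
      by (simp add: o_def mollified_grad_def r_def)
    moreover have "((\<lambda>w. \<sigma> (u - w) * r w - \<sigma> (v - w) * r w) has_integral
        sigma_delta V \<rho> \<delta> u - sigma_delta V \<rho> \<delta> v) UNIV"
      unfolding sigma_delta_def r_def
      by (intro has_integral_diff integrable_integral integrable_sigma_rho_delta)
    ultimately show ?thesis
      unfolding q_eq R_def using has_integral_diff[OF _ integrable_integral[OF int_inner]] by simp
  qed
  have q_bounds: "cm/2 * (norm (u - v))\<^sup>2 * r w \<le> q w \<and> q w \<le> cp/2 * (norm (u - v))\<^sup>2 * r w" for w
  proof -
    have "cm/2 * (norm (u - v))\<^sup>2 \<le> \<sigma> (u - w) - \<sigma> (v - w) - grad \<sigma> (v - w) \<bullet> (u - v)"
      "\<sigma> (u - w) - \<sigma> (v - w) - grad \<sigma> (v - w) \<bullet> (u - v) \<le> cp/2 * (norm (u - v))\<^sup>2"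
      using bregman_quadratic_bounds[OF sigma_diff grad_sigma_mono, of "u - w" "v - w"] by simp_all
    then show ?thesis
      unfolding q_def using mult_right_mono r_nonneg by blast
  qed
  have r_int: "(r has_integral 1) UNIV"
    unfolding r_def by (rule has_integral_rho_delta[OF rho_supp delta rho_int])
  show ?thesis
    using has_integral_le[OF has_integral_mult_right[OF r_int] q_int, of "cm/2 * (norm (u - v))\<^sup>2"]
      has_integral_le[OF q_int has_integral_mult_right[OF r_int], of "cp/2 * (norm (u - v))\<^sup>2"]
      q_bounds by simp
qed

lemma sigma_delta_has_derivative_mollified:
  "(sigma_delta V \<rho> \<delta> has_derivative (\<lambda>h. mollified_grad v \<bullet> h)) (at v)"
proof (rule has_derivative_of_quadratic_remainder)
  fix y
  define E where "E = sigma_delta V \<rho> \<delta> y - sigma_delta V \<rho> \<delta> v - mollified_grad v \<bullet> (y - v)"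
  define n where "n = (norm (y - v))\<^sup>2"
  have "cm * n \<le> 2 * E" "2 * E \<le> cp * n"
    using sigma_delta_bregman_bounds_mollified[of y v] by (simp_all add: E_def n_def)
  moreover have "cp * n \<le> \<bar>cp\<bar> * n" "- (cm * n) \<le> \<bar>cm\<bar> * n" "0 \<le> \<bar>cm\<bar> * n" "0 \<le> \<bar>cp\<bar> * n"
    using mult_right_mono[of cp "\<bar>cp\<bar>" n] mult_right_mono[of "- cm" "\<bar>cm\<bar>" n]
    by (simp_all add: n_def)
  ultimately have "2 * \<bar>E\<bar> \<le> \<bar>cm\<bar> * n + \<bar>cp\<bar> * n"
    by linarith
  then show "norm E \<le> (\<bar>cm\<bar> + \<bar>cp\<bar>)/2 * n"
    by (simp add: field_simps)
qed (rule bounded_linear_inner_right)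

lemma grad_sigma_delta_eq: "grad (sigma_delta V \<rho> \<delta>) v = mollified_grad v"
proof -
  have "frechet_derivative (sigma_delta V \<rho> \<delta>) (at v) = (\<lambda>h. mollified_grad v \<bullet> h)"
    using frechet_derivative_at[OF sigma_delta_has_derivative_mollified] by simp
  then show ?thesis by (simp add: grad_def inner_axis vec_eq_iff)
qed

lemma sigma_delta_has_derivative:
  "(sigma_delta V \<rho> \<delta> has_derivative (\<lambda>h. grad (sigma_delta V \<rho> \<delta>) v \<bullet> h)) (at v)"
  using sigma_delta_has_derivative_mollified by (simp add: grad_sigma_delta_eq)

lemma sigma_delta_bregman_bounds:
  "cm/2 * (norm u)\<^sup>2 \<le> sigma_delta V \<rho> \<delta> u - sigma_delta V \<rho> \<delta> 0 - grad (sigma_delta V \<rho> \<delta>) 0 \<bullet> u"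
  "sigma_delta V \<rho> \<delta> u - sigma_delta V \<rho> \<delta> 0 - grad (sigma_delta V \<rho> \<delta>) 0 \<bullet> u \<le> cp/2 * (norm u)\<^sup>2"
  using sigma_delta_bregman_bounds_mollified[of u 0] by (simp_all add: grad_sigma_delta_eq)

end

definition cell_center :: "nat \<Rightarrow> real^'d \<Rightarrow> real^'d" where
  "cell_center N x = (1 / real N) *\<^sub>R x"

text \<open>Index of the lattice site whose cell \<open>B(x/N, 1/N)\<close> contains \<open>\<theta>\<close>; the half-open cells
  tile \<open>\<real>\<^sup>d\<close>, so the rounding is exact.\<close>
definition cell_index :: "nat \<Rightarrow> real^'d \<Rightarrow> real^'d" where
  "cell_index N \<theta> = (\<chi> j. of_int \<lfloor>real N * \<theta> $ j + 1/2\<rfloor>)"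

abbreviation cell :: "nat \<Rightarrow> real^'d \<Rightarrow> (real^'d) set" where
  "cell N x \<equiv> cube (cell_center N x) (1 / real N)"

lemma lattice_add_axis: "x \<in> lattice \<Longrightarrow> x + axis i 1 \<in> lattice"
  and lattice_diff_axis: "x \<in> lattice \<Longrightarrow> x - axis i 1 \<in> lattice"
  by (auto simp: lattice_def axis_def)

lemma cell_index_in_lattice: "cell_index N \<theta> \<in> lattice"
  by (simp add: lattice_def cell_index_def)

lemma mem_cell_iff:
  assumes N: "N \<ge> 1" and x: "x \<in> lattice"
  shows "\<theta> \<in> cell N x \<longleftrightarrow> x = cell_index N \<theta>"
proof -
  have Np: "real N > 0" using N by simp
  have "\<theta> \<in> cell N x \<longleftrightarrow>
      (\<forall>j. x$j / real N - 1 / real N / 2 \<le> \<theta>$j \<and> \<theta>$j < x$j / real N + 1 / real N / 2)"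
    by (simp add: cube_def cell_center_def)
  also have "\<dots> \<longleftrightarrow> (\<forall>j. x$j \<le> real N * \<theta>$j + 1/2 \<and> real N * \<theta>$j + 1/2 < x$j + 1)"
    using Np by (simp add: field_simps)
  also have "\<dots> \<longleftrightarrow> (\<forall>j. x$j = of_int \<lfloor>real N * \<theta>$j + 1/2\<rfloor>)"
  proof -
    have "x$j \<le> real N * \<theta>$j + 1/2 \<and> real N * \<theta>$j + 1/2 < x$j + 1
        \<longleftrightarrow> x$j = of_int \<lfloor>real N * \<theta>$j + 1/2\<rfloor>" for j
    proof -
      obtain k where k: "x$j = of_int k" using x by (auto simp: lattice_def elim: Ints_cases)
      show ?thesis unfolding k using floor_eq_iff[of "real N * \<theta>$j + 1/2" k] by auto
    qed
    then show ?thesis by simp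
  qed
  also have "\<dots> \<longleftrightarrow> x = cell_index N \<theta>" by (simp add: cell_index_def vec_eq_iff)
  finally show ?thesis .
qed

lemma cell_center_in_cell: "N \<ge> 1 \<Longrightarrow> cell_center N x \<in> cell N x"
  by (simp add: cube_def)

lemma cell_index_cell_center: "N \<ge> 1 \<Longrightarrow> x \<in> lattice \<Longrightarrow> cell_index N (cell_center N x) = x"
  using mem_cell_iff cell_center_in_cell by metis

lemma in_cell_cell_index: "N \<ge> 1 \<Longrightarrow> \<theta> \<in> cell N (cell_index N \<theta>)"
  using mem_cell_iff[of N "cell_index N \<theta>" \<theta>] cell_index_in_lattice[of N \<theta>] by simp

lemma cell_center_add_axis: "cell_center N (x + axis i 1) = cell_center N x + (1 / real N) *\<^sub>R axis i 1"
  and cell_center_diff_axis: "cell_center N (x - axis i 1) = cell_center N x - (1 / real N) *\<^sub>R axis i 1"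
  by (simp_all add: cell_center_def scaleR_right_distrib scaleR_right_diff_distrib)

lemma cell_index_add_axis:
  assumes "N \<ge> 1"
  shows "cell_index N (\<theta> + (1 / real N) *\<^sub>R axis i 1) = cell_index N \<theta> + axis i 1"
proof -
  have "\<theta> \<in> cube (cell_center N (cell_index N \<theta>)) (1 / real N)"
    by (rule in_cell_cell_index[OF assms])
  then have "\<theta> + (1 / real N) *\<^sub>R axis i 1 \<in> cell N (cell_index N \<theta> + axis i 1)"
    unfolding cell_center_add_axis cube_def by simp
  then show ?thesis
    using mem_cell_iff[OF assms lattice_add_axis[OF cell_index_in_lattice]] by metis
qed

lemma DN_subset_lattice: "DN N D \<subseteq> lattice"
  by (auto simp: DN_def scaled_lattice_def)

lemma mem_tDN_iff:
  assumes N: "N \<ge> 1"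
  shows "\<theta> \<in> tDN N D \<longleftrightarrow> cell_index N \<theta> \<in> DN N D"
proof
  assume "\<theta> \<in> tDN N D"
  then obtain x where x: "x \<in> DN N D" "\<theta> \<in> cell N x"
    by (auto simp: tDN_def cell_center_def)
  then have "x = cell_index N \<theta>" using mem_cell_iff[OF N] DN_subset_lattice by (metis subsetD)
  then show "cell_index N \<theta> \<in> DN N D" using x by simp
next
  assume "cell_index N \<theta> \<in> DN N D"
  then show "\<theta> \<in> tDN N D"
    using in_cell_cell_index[OF N, of \<theta>] by (auto simp: tDN_def cell_center_def)
qed

lemma cell_center_mem_tDN_iff:
  "N \<ge> 1 \<Longrightarrow> x \<in> lattice \<Longrightarrow> cell_center N x \<in> tDN N D \<longleftrightarrow> x \<in> DN N D"
  using mem_tDN_iff cell_index_cell_center by metis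

lemma finite_lattice_subset:
  assumes "S \<subseteq> lattice" "bounded S"
  shows "finite S"
proof -
  obtain R where R: "\<forall>x\<in>S. norm x \<le> R" using assms(2) by (auto simp: bounded_iff)
  define M where "M = \<lceil>R\<rceil>"
  have "S \<subseteq> (\<lambda>f. \<chi> j. real_of_int (f j)) ` (PiE UNIV (\<lambda>_. {-M..M}))"
  proof
    fix x assume x: "x \<in> S"
    define f where "f j = \<lfloor>x$j\<rfloor>" for j
    have xf: "x$j = real_of_int (f j)" for j
      using x assms(1) by (auto simp: lattice_def f_def elim!: Ints_cases)
    have "f j \<in> {-M..M}" for j
    proof -
      have "\<bar>x$j\<bar> \<le> R" using component_le_norm_cart[of x j] R x by auto
      then show ?thesis using xf[of j] unfolding M_def by (simp add: le_ceiling_iff ceiling_le_iff) linarith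
    qed
    then have "f \<in> PiE UNIV (\<lambda>_. {-M..M})" by auto
    moreover have "x = (\<chi> j. real_of_int (f j))" using xf by (simp add: vec_eq_iff)
    ultimately show "x \<in> (\<lambda>f. \<chi> j. real_of_int (f j)) ` (PiE UNIV (\<lambda>_. {-M..M}))" by blast
  qed
  moreover have "finite (PiE (UNIV::'a set) (\<lambda>_. {-M..M}))" by (intro finite_PiE) auto
  ultimately show ?thesis using finite_subset by blast
qed

lemma finite_DN:
  assumes "bounded D"
  shows "finite (DN N D)"
proof (rule finite_lattice_subset[OF DN_subset_lattice])
  have "DN N D \<subseteq> (\<lambda>y. real N *\<^sub>R y) ` D" by (auto simp: DN_def scaled_lattice_def)
  moreover have "bounded ((\<lambda>y. real N *\<^sub>R y) ` D)"
    using assms by (intro bounded_linear_image) (auto intro: bounded_linear_scaleR_right)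
  ultimately show "bounded (DN N D)" using bounded_subset by blast
qed

lemma has_integral_cube_iff_cbox:
  fixes g :: "real^'d \<Rightarrow> real"
  assumes "l > 0"
  shows "(g has_integral I) (cube c l) \<longleftrightarrow> (g has_integral I) (cbox (c - (l/2) *\<^sub>R 1) (c + (l/2) *\<^sub>R 1))"
proof (rule has_integral_spike_set_eq)
  have box: "box (c - (l/2) *\<^sub>R 1) (c + (l/2) *\<^sub>R 1) \<subseteq> cube c l"
    and cbox: "cube c l \<subseteq> cbox (c - (l/2) *\<^sub>R 1) (c + (l/2) *\<^sub>R 1)"
    by (auto simp: cube_def mem_box_cart less_imp_le)
  show "negligible {x \<in> cube c l - cbox (c - (l/2) *\<^sub>R 1) (c + (l/2) *\<^sub>R 1). g x \<noteq> 0}"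
    using cbox by (intro negligible_subset[OF negligible_empty]) auto
  show "negligible {x \<in> cbox (c - (l/2) *\<^sub>R 1) (c + (l/2) *\<^sub>R 1) - cube c l. g x \<noteq> 0}"
    using box by (intro negligible_subset[OF negligible_frontier_interval]) auto
qed

lemma measure_cube_cbox:
  assumes "l > 0"
  shows "measure lborel (cbox (c - (l/2) *\<^sub>R 1) (c + (l/2) *\<^sub>R (1::real^'d))) = l ^ CARD('d)"
proof -
  have "cbox (c - (l/2) *\<^sub>R 1) (c + (l/2) *\<^sub>R (1::real^'d)) \<noteq> {}"
    using assms by (auto simp: interval_eq_empty_cart)
  from content_cbox_cart[OF this] show ?thesis by simp
qed

lemma integral_cube_eq_cbox:
  fixes f :: "real^'d \<Rightarrow> real"
  assumes "continuous_on UNIV f" "l > 0"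
  shows "integral (cube c l) f = integral (cbox (c - (l/2) *\<^sub>R 1) (c + (l/2) *\<^sub>R 1)) f"
proof -
  have "(f has_integral integral (cbox (c - (l/2) *\<^sub>R 1) (c + (l/2) *\<^sub>R 1)) f) (cbox (c - (l/2) *\<^sub>R 1) (c + (l/2) *\<^sub>R 1))"
    using integrable_continuous[OF continuous_on_subset[OF assms(1)]] by (simp add: integrable_integral)
  then have "(f has_integral integral (cbox (c - (l/2) *\<^sub>R 1) (c + (l/2) *\<^sub>R 1)) f) (cube c l)"
    using has_integral_cube_iff_cbox[OF assms(2)] by blast
  then show ?thesis by (rule integral_unique)
qed

lemma abs_integral_cbox_shift_diff_le:
  fixes f :: "real^'d \<Rightarrow> real"
  assumes cont: "continuous_on UNIV f" and shift: "\<And>x. \<bar>f (a + x) - f x\<bar> \<le> M"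
  shows "\<bar>integral (cbox (lo + a) (hi + a)) f - integral (cbox lo hi) f\<bar> \<le> M * measure lborel (cbox lo hi)"
proof -
  have int: "(f has_integral integral (cbox u v) f) (cbox u v)" for u v
    using integrable_continuous[OF continuous_on_subset[OF cont]] by (simp add: integrable_integral)
  then have "((f \<circ> (+) a) has_integral integral (cbox (lo + a) (hi + a)) f) (cbox lo hi)"
    using has_integral_shift_cbox_iff by blast
  from has_integral_diff[OF this int]
  have "norm (integral (cbox (lo + a) (hi + a)) f - integral (cbox lo hi) f) \<le> M * measure lborel (cbox lo hi)"
    by (rule has_integral_bound[rotated]) (use shift order_trans[OF abs_ge_zero shift] in auto)
  then show ?thesis by simp
qed

lemma has_integral_indicator_cube:
  assumes "l > 0"
  shows "((\<lambda>\<theta>::real^'d. if \<theta> \<in> cube c l then 1 else 0) has_integral l ^ CARD('d)) UNIV"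
proof -
  have "((\<lambda>_. 1::real) has_integral l ^ CARD('d)) (cbox (c - (l/2) *\<^sub>R 1) (c + (l/2) *\<^sub>R (1::real^'d)))"
    using has_integral_const[of "1::real" "c - (l/2) *\<^sub>R 1" "c + (l/2) *\<^sub>R (1::real^'d)"]
      measure_cube_cbox[OF assms, of c] by simp
  then have "((\<lambda>_. 1::real) has_integral l ^ CARD('d)) (cube c l)"
    using has_integral_cube_iff_cbox[OF assms] by blast
  then show ?thesis by (simp add: has_integral_restrict_UNIV)
qed

lemma has_integral_step_function:
  fixes f :: "real^'d \<Rightarrow> real"
  assumes N: "N \<ge> 1" and P: "finite P" "P \<subseteq> lattice"
    and step: "\<And>\<theta>. f \<theta> = f (cell_center N (cell_index N \<theta>))"
    and zero: "\<And>x. x \<in> lattice - P \<Longrightarrow> f (cell_center N x) = 0"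
  shows "(f has_integral (\<Sum>x\<in>P. f (cell_center N x)) / real N ^ CARD('d)) UNIV"
proof -
  have eq: "f \<theta> = (\<Sum>x\<in>P. f (cell_center N x) * (if \<theta> \<in> cell N x then 1 else 0))" for \<theta>
  proof -
    have "(\<Sum>x\<in>P. f (cell_center N x) * (if \<theta> \<in> cell N x then 1 else 0))
        = (\<Sum>x\<in>P. if x = cell_index N \<theta> then f (cell_center N x) else 0)"
      by (rule sum.cong) (use mem_cell_iff[OF N] P(2) in auto)
    also have "\<dots> = f \<theta>"
      using P(1) step[of \<theta>] zero[of "cell_index N \<theta>"] cell_index_in_lattice[of N \<theta>]
      by (auto simp: sum.delta')
    finally show ?thesis by simp
  qed
  have "((\<lambda>\<theta>. \<Sum>x\<in>P. f (cell_center N x) * (if \<theta> \<in> cell N x then 1 else 0))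
     has_integral (\<Sum>x\<in>P. f (cell_center N x) * (1 / real N) ^ CARD('d))) UNIV"
    using N by (intro has_integral_sum[OF P(1)] has_integral_mult_right has_integral_indicator_cube) simp
  then show ?thesis
    by (simp add: eq[symmetric] sum_divide_distrib[symmetric] field_simps)
qed

section \<open>The discrete Laplacian\<close>

lemma LapN_cell_center:
  assumes N: "N \<ge> 1" and y: "y \<in> DN N D"
  shows "LapN N D k (cell_center N y) = real N * (\<Sum>i\<in>UNIV.
      real N * (k (cell_center N (y + axis i 1)) - k (cell_center N y)) * ind (y + axis i 1 \<in> DN N D)
    - real N * (k (cell_center N y) - k (cell_center N (y - axis i 1))) * ind (y - axis i 1 \<in> DN N D))"
proof -
  have yl: "y \<in> lattice" using y DN_subset_lattice by blast
  have "cell_center N y \<in> tDN N D" using cell_center_mem_tDN_iff[OF N yl] y by simp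
  moreover have "cell_center N y + (1 / real N) *\<^sub>R axis i 1 \<in> tDN N D \<longleftrightarrow> y + axis i 1 \<in> DN N D" for i
    using cell_center_mem_tDN_iff[OF N lattice_add_axis[OF yl]] by (simp add: cell_center_add_axis)
  moreover have "cell_center N y - (1 / real N) *\<^sub>R axis i 1 \<in> tDN N D \<longleftrightarrow> y - axis i 1 \<in> DN N D" for i
    using cell_center_mem_tDN_iff[OF N lattice_diff_axis[OF yl]] by (simp add: cell_center_diff_axis)
  ultimately show ?thesis
    by (simp add: LapN_def nablaN_i_def ind_def cell_center_add_axis cell_center_diff_axis)
qed

lemma sum_shift_ind:
  fixes A :: "'a::ab_group_add set" and f :: "'a \<Rightarrow> real"
  assumes "finite A"
  shows "(\<Sum>y\<in>A. f y * ind (y - e \<in> A)) = (\<Sum>z\<in>A. f (z + e) * ind (z + e \<in> A))"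
proof -
  have "(\<Sum>y\<in>A. f y * ind (y - e \<in> A)) = (\<Sum>y\<in>{y\<in>A. y - e \<in> A}. f y)"
    using assms by (simp add: ind_def sum.inter_filter[symmetric] if_distrib cong: if_cong)
  also have "{y\<in>A. y - e \<in> A} = (\<lambda>z. z + e) ` {z\<in>A. z + e \<in> A}"
    by (auto simp: image_iff) (metis diff_add_cancel)
  also have "(\<Sum>y\<in>(\<lambda>z. z + e) ` {z\<in>A. z + e \<in> A}. f y) = (\<Sum>z\<in>{z\<in>A. z + e \<in> A}. f (z + e))"
    by (rule sum.reindex_cong[where l="\<lambda>z. z + e"]) (auto simp: inj_on_def)
  also have "\<dots> = (\<Sum>z\<in>A. f (z + e) * ind (z + e \<in> A))"
    using assms by (simp add: ind_def sum.inter_filter[symmetric] if_distrib cong: if_cong)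
  finally show ?thesis .
qed

text \<open>The discrete Dirichlet Laplacian is negative semidefinite: summation by parts turns
  \<open>\<Sum> k \<Delta>\<^sub>N k\<close> into minus the sum of the squared differences along the bonds inside \<open>D\<^sub>N\<close>.\<close>
lemma sum_mult_LapN_nonpos:
  assumes N: "N \<ge> 1" and fin: "finite (DN N D)"
  shows "(\<Sum>y\<in>DN N D. k (cell_center N y) * LapN N D k (cell_center N y)) \<le> 0"
proof -
  define K where "K y = k (cell_center N y)" for y
  define A where "A i = (\<Sum>y\<in>DN N D. K y * (real N * (K (y + axis i 1) - K y) * ind (y + axis i 1 \<in> DN N D)
    - real N * (K y - K (y - axis i 1)) * ind (y - axis i 1 \<in> DN N D)))" for i
  have "A i \<le> 0" for i
  proof -
    let ?e = "axis i (1::real)"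
    have shift: "(\<Sum>y\<in>DN N D. (K y * (K y - K (y - ?e))) * ind (y - ?e \<in> DN N D))
        = (\<Sum>z\<in>DN N D. (K (z + ?e) * (K (z + ?e) - K (z + ?e - ?e))) * ind (z + ?e \<in> DN N D))"
      by (rule sum_shift_ind[OF fin, of "\<lambda>y. K y * (K y - K (y - ?e))"])
    have "A i = real N * ((\<Sum>y\<in>DN N D. K y * (K (y + ?e) - K y) * ind (y + ?e \<in> DN N D))
        - (\<Sum>y\<in>DN N D. (K y * (K y - K (y - ?e))) * ind (y - ?e \<in> DN N D)))"
      unfolding A_def by (simp add: sum_distrib_left sum_subtractf[symmetric] algebra_simps)
    also have "\<dots> = real N * (\<Sum>y\<in>DN N D. - ((K (y + ?e) - K y)\<^sup>2 * ind (y + ?e \<in> DN N D)))"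
      unfolding shift by (simp add: sum_subtractf[symmetric] power2_eq_square algebra_simps)
    also have "\<dots> \<le> 0"
      by (intro mult_nonneg_nonpos sum_nonpos) (auto simp: ind_def)
    finally show ?thesis .
  qed
  moreover have "(\<Sum>y\<in>DN N D. k (cell_center N y) * LapN N D k (cell_center N y)) = real N * (\<Sum>i\<in>UNIV. A i)"
    unfolding A_def K_def
    by (simp add: LapN_cell_center[OF N] sum_distrib_left sum.swap[of _ "DN N D"] algebra_simps cong: sum.cong)
  ultimately show ?thesis by (simp add: mult_nonneg_nonpos sum_nonpos)
qed

lemma cell_outside_DN_near_complement:
  fixes \<theta> :: "real^'d"
  assumes N: "N \<ge> 1" and y: "y \<in> lattice" "y \<notin> DN N D" and \<theta>: "\<theta> \<in> cell N y"
  shows "\<exists>q. q \<notin> D \<and> dist \<theta> q \<le> 3 * real CARD('d) / real N"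
proof -
  have Npos: "real N > 0" using N by simp
  obtain q where q: "q \<notin> D" "\<forall>j. \<bar>q$j - cell_center N y $ j\<bar> \<le> 5 / (2 * real N)"
  proof (cases "y \<in> scaled_lattice N D")
    case False
    then have "cell_center N y \<notin> D"
      using y Npos by (auto simp: scaled_lattice_def cell_center_def image_iff)
    then show ?thesis using that[of "cell_center N y"] Npos by simp
  next
    case True
    then obtain q where q: "q \<in> cube ((1 / real N) *\<^sub>R y) (5 / real N)" "q \<notin> D"
      using y by (auto simp: DN_def)
    have "\<bar>q$j - cell_center N y $ j\<bar> \<le> 5 / (2 * real N)" for j
    proof -
      have "y$j / real N - 5 / (real N * 2) \<le> q$j \<and> q$j < y$j / real N + 5 / (real N * 2)"
        using q(1) by (simp add: cube_def)
      then show ?thesis by (simp add: cell_center_def abs_le_iff mult.commute)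
    qed
    then show ?thesis using that q(2) by blast
  qed
  have \<theta>q: "\<bar>\<theta>$j - q$j\<bar> \<le> 3 / real N" for j
  proof -
    have "cell_center N y $ j - 1 / (real N * 2) \<le> \<theta> $ j \<and> \<theta> $ j < cell_center N y $ j + 1 / (real N * 2)"
      using \<theta> by (simp add: cube_def)
    then have "\<bar>\<theta>$j - cell_center N y $ j\<bar> \<le> 1 / (2 * real N)" by (simp add: abs_le_iff mult.commute)
    moreover have "5 / (2 * real N) + 1 / (2 * real N) = 3 / real N" by (simp add: field_simps)
    ultimately show ?thesis using q(2)[rule_format, of j] by linarith
  qed
  have "dist \<theta> q \<le> (\<Sum>j\<in>UNIV. \<bar>(\<theta> - q)$j\<bar>)" unfolding dist_norm by (rule norm_le_l1_cart)
  also have "\<dots> \<le> (\<Sum>j\<in>(UNIV::'d set). 3 / real N)" by (intro sum_mono) (use \<theta>q in simp)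
  also have "\<dots> = 3 * real CARD('d) / real N" by simp
  finally show ?thesis using q(1) by blast
qed

locale discrete_flow =
  fixes V :: "real \<Rightarrow> real" and \<rho> :: "real^'d \<Rightarrow> real" and \<delta> :: real
    and D :: "(real^'d) set" and h0 :: "real^'d \<Rightarrow> real"
    and N :: nat and h :: "real \<Rightarrow> real^'d \<Rightarrow> real"
  assumes N_ge_1: "N \<ge> 1"
    and bounded_D: "bounded D"
    and solution: "discrete_solution V \<rho> \<delta> D h0 N h"
begin

lemma step_fun_solution: "t \<ge> 0 \<Longrightarrow> h t \<theta> = h t (cell_center N (cell_index N \<theta>))"
  using solution in_cell_cell_index[OF N_ge_1, of \<theta>] cell_index_in_lattice[of N \<theta>]
  unfolding discrete_solution_def step_fun_def cell_center_def by blast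

lemma solution_eq_0_outside:
  "t \<ge> 0 \<Longrightarrow> y \<in> lattice \<Longrightarrow> y \<notin> DN N D \<Longrightarrow> h t (cell_center N y) = 0"
  using solution cell_center_mem_tDN_iff[OF N_ge_1] unfolding discrete_solution_def by blast

lemma nablaN_i_solution:
  "t \<ge> 0 \<Longrightarrow> nablaN_i N i (h t) \<theta>
    = real N * (h t (cell_center N (cell_index N \<theta> + axis i 1)) - h t (cell_center N (cell_index N \<theta>)))"
  using step_fun_solution[of t \<theta>] step_fun_solution[of t "\<theta> + (1 / real N) *\<^sub>R axis i 1"]
  by (simp add: nablaN_i_def cell_index_add_axis[OF N_ge_1])

lemma initial_value:
  assumes y: "y \<in> lattice"
  shows "h 0 (cell_center N y) =
    (if y \<in> DN N D then real N ^ CARD('d) * integral (cell N y) h0 else 0)"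
proof (cases "y \<in> DN N D")
  case True
  then have "cell_center N y \<in> tDN N D" using cell_center_mem_tDN_iff[OF N_ge_1 y] by simp
  then show ?thesis
    using solution y True cell_center_in_cell[OF N_ge_1, of y]
    unfolding discrete_solution_def cell_center_def by auto
qed (use solution_eq_0_outside y in simp)

text \<open>The solution lives on the cells of \<open>D\<^sub>N\<close>, whose centres lie in \<open>D\<close>.\<close>
lemma solution_eq_0_far:
  assumes t: "t \<ge> 0" and R: "\<forall>x\<in>D. norm x \<le> R" and z: "\<bar>z$j\<bar> > R + 1"
  shows "h t z = 0"
proof (rule ccontr)
  assume "h t z \<noteq> 0"
  then have "cell_index N z \<in> DN N D"
    using solution t mem_tDN_iff[OF N_ge_1] unfolding discrete_solution_def by blast
  then have "cell_center N (cell_index N z) \<in> D"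
    using N_ge_1 by (auto simp: DN_def cube_def cell_center_def)
  then have "\<bar>cell_center N (cell_index N z) $ j\<bar> \<le> R"
    using R component_le_norm_cart[of "cell_center N (cell_index N z)" j] by force
  moreover have "\<bar>z$j - cell_center N (cell_index N z) $ j\<bar> \<le> 1"
  proof -
    have "cell_center N (cell_index N z) $ j - 1 / real N / 2 \<le> z$j
        \<and> z$j < cell_center N (cell_index N z) $ j + 1 / real N / 2"
      using in_cell_cell_index[OF N_ge_1, of z] by (simp add: cube_def)
    moreover have "1 / real N / 2 \<le> 1" using N_ge_1 by (simp add: divide_simps)
    ultimately show ?thesis by (simp add: abs_le_iff)
  qed
  ultimately show False using z by linarith
qed

lemma nablaN_solution_eq_0_far:
  assumes t: "t \<ge> 0" and R: "\<forall>x\<in>D. norm x \<le> R"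
    and \<theta>: "\<theta> \<notin> cbox (- ((R + 2) *\<^sub>R 1)) ((R + 2) *\<^sub>R 1)"
  shows "nablaN N (h t) \<theta> = 0"
proof -
  have "\<exists>j. \<bar>\<theta>$j\<bar> > R + 2"
  proof (rule ccontr)
    assume "\<not> (\<exists>j. \<bar>\<theta>$j\<bar> > R + 2)"
    then have "\<forall>j. - (R + 2) \<le> \<theta>$j \<and> \<theta>$j \<le> R + 2" by (metis abs_le_iff minus_le_iff not_less)
    then show False using \<theta> by (simp add: mem_box_cart)
  qed
  then obtain j where j: "\<bar>\<theta>$j\<bar> > R + 2" ..
  have "h t \<theta> = 0" using solution_eq_0_far[OF t R, of \<theta> j] j by simp
  moreover have "h t (\<theta> + (1 / real N) *\<^sub>R axis i 1) = 0" for i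
  proof (rule solution_eq_0_far[OF t R, where j=j])
    have "\<bar>((1 / real N) *\<^sub>R axis i (1::real)) $ j\<bar> \<le> 1"
      using N_ge_1 by (simp add: axis_def divide_simps)
    then show "R + 1 < \<bar>(\<theta> + (1 / real N) *\<^sub>R axis i 1) $ j\<bar>"
      using j by (simp only: vector_add_component)
  qed
  ultimately show ?thesis by (simp add: nablaN_def nablaN_i_def vec_eq_iff)
qed

definition site_value :: "real \<Rightarrow> real^'d \<Rightarrow> real" where
  "site_value t y = h t (cell_center N y)"

definition site_grad :: "real \<Rightarrow> real^'d \<Rightarrow> real^'d" where
  "site_grad t x = nablaN N (h t) (cell_center N x)"

text \<open>Sites with a bond to \<open>D\<^sub>N\<close>; off these sites the discrete gradient vanishes.\<close>
definition bond_sites :: "(real^'d) set" where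
  "bond_sites = DN N D \<union> (\<Union>i. (\<lambda>x. x - axis i 1) ` DN N D)"

lemma finite_bond_sites: "finite bond_sites"
  unfolding bond_sites_def using finite_DN[OF bounded_D] by auto

lemma bond_sites_subset_lattice: "bond_sites \<subseteq> lattice"
  unfolding bond_sites_def using DN_subset_lattice lattice_diff_axis by fastforce

lemma site_grad_component: "site_grad t x $ i = real N * (site_value t (x + axis i 1) - site_value t x)"
  by (simp add: site_grad_def site_value_def nablaN_def nablaN_i_def cell_center_add_axis)

lemma nablaN_eq_site_grad: "t \<ge> 0 \<Longrightarrow> nablaN N (h t) \<theta> = site_grad t (cell_index N \<theta>)"
  by (simp add: vec_eq_iff nablaN_def site_grad_component site_value_def nablaN_i_solution)

lemma site_grad_eq_0:
  assumes t: "t \<ge> 0" and x: "x \<in> lattice" "x \<notin> bond_sites"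
  shows "site_grad t x = 0"
proof -
  have "x \<notin> DN N D" "x + axis i 1 \<notin> DN N D" for i
    using x by (auto simp: bond_sites_def intro!: image_eqI[of _ _ "x + axis i 1"])
  then have "site_value t x = 0" "site_value t (x + axis i 1) = 0" for i
    using solution_eq_0_outside[OF t] x(1) lattice_add_axis[OF x(1)] by (simp_all add: site_value_def)
  then show ?thesis by (simp add: vec_eq_iff site_grad_component)
qed

lemma has_integral_norm_nablaN_sq:
  assumes t: "t \<ge> 0"
  shows "((\<lambda>\<theta>. (norm (nablaN N (h t) \<theta>))\<^sup>2) has_integral
      (\<Sum>x\<in>bond_sites. (norm (site_grad t x))\<^sup>2) / real N ^ CARD('d)) UNIV"
proof -
  have "((\<lambda>\<theta>. (norm (nablaN N (h t) \<theta>))\<^sup>2) has_integral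
      (\<Sum>x\<in>bond_sites. (norm (nablaN N (h t) (cell_center N x)))\<^sup>2) / real N ^ CARD('d)) UNIV"
  proof (rule has_integral_step_function[OF N_ge_1 finite_bond_sites bond_sites_subset_lattice])
    show "(norm (nablaN N (h t) \<theta>))\<^sup>2 = (norm (nablaN N (h t) (cell_center N (cell_index N \<theta>))))\<^sup>2" for \<theta>
      using nablaN_eq_site_grad[OF t] cell_index_cell_center[OF N_ge_1 cell_index_in_lattice] by metis
    show "(norm (nablaN N (h t) (cell_center N x)))\<^sup>2 = 0" if "x \<in> lattice - bond_sites" for x
      using site_grad_eq_0[OF t] that by (simp add: site_grad_def)
  qed
  then show ?thesis by (simp add: site_grad_def)
qed

lemma abs_integral_cell_le:
  assumes cont: "continuous_on UNIV h0" and bound: "\<forall>x. \<bar>h0 x\<bar> \<le> M0"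
  shows "\<bar>integral (cell N y) h0\<bar> \<le> M0 * (1 / real N) ^ CARD('d)"
proof -
  define c where "c = cell_center N y"
  have N': "1 / real N > 0" using N_ge_1 by simp
  have "norm (integral (cbox (c - ((1 / real N)/2) *\<^sub>R 1) (c + ((1 / real N)/2) *\<^sub>R 1)) h0)
      \<le> M0 * measure lborel (cbox (c - ((1 / real N)/2) *\<^sub>R 1) (c + ((1 / real N)/2) *\<^sub>R (1::real^'d)))"
    by (rule has_integral_bound[where f=h0])
       (use bound integrable_continuous[OF continuous_on_subset[OF cont]] in
        \<open>auto simp: integrable_integral intro: order_trans[OF abs_ge_zero]\<close>)
  then show ?thesis
    using integral_cube_eq_cbox[OF cont N', of c] measure_cube_cbox[OF N', of c] by (simp add: c_def)
qed

lemma abs_initial_value_le: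
  assumes cont: "continuous_on UNIV h0" and bound: "\<forall>x. \<bar>h0 x\<bar> \<le> M0"
  shows "\<bar>h 0 \<theta>\<bar> \<le> M0"
proof -
  have "M0 \<ge> 0" using bound by (meson abs_ge_zero order_trans)
  moreover have "\<bar>real N ^ CARD('d) * integral (cell N y) h0\<bar> \<le> M0" for y
  proof -
    have "\<bar>real N ^ CARD('d) * integral (cell N y) h0\<bar>
        \<le> real N ^ CARD('d) * (M0 * (1 / real N) ^ CARD('d))"
      by (simp add: abs_mult abs_integral_cell_le[OF cont bound] mult_left_mono)
    also have "\<dots> = M0" using N_ge_1 by (simp add: power_one_over)
    finally show ?thesis .
  qed
  ultimately have "\<bar>h 0 (cell_center N (cell_index N \<theta>))\<bar> \<le> M0"
    using initial_value[OF cell_index_in_lattice] by simp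
  then show ?thesis using step_fun_solution[of 0 \<theta>] by simp
qed

lemma abs_nablaN_i_initial_le_sup:
  assumes "continuous_on UNIV h0" "\<forall>x. \<bar>h0 x\<bar> \<le> M0"
  shows "\<bar>nablaN_i N i (h 0) \<theta>\<bar> \<le> 2 * real N * M0"
proof -
  have "\<bar>h 0 (\<theta> + (1 / real N) *\<^sub>R axis i 1) - h 0 \<theta>\<bar> \<le> 2 * M0"
    using abs_initial_value_le[OF assms, of \<theta>]
      abs_initial_value_le[OF assms, of "\<theta> + (1 / real N) *\<^sub>R axis i 1"] by linarith
  then have "real N * \<bar>h 0 (\<theta> + (1 / real N) *\<^sub>R axis i 1) - h 0 \<theta>\<bar> \<le> real N * (2 * M0)"
    by (rule mult_left_mono) auto
  then show ?thesis by (simp add: nablaN_i_def abs_mult)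
qed

text \<open>Once the mesh is fine compared with the distance \<open>\<eta>\<close> from the support of \<open>h\<^sub>0\<close> to the
  complement of \<open>D\<close>, no cell outside \<open>D\<^sub>N\<close> meets the support, so the truncation to \<open>D\<^sub>N\<close> in
  the initial data is invisible.\<close>
lemma initial_value_eq_cell_average:
  assumes y: "y \<in> lattice"
    and \<eta>: "\<forall>z q. q \<notin> D \<longrightarrow> dist z q < \<eta> \<longrightarrow> h0 z = 0"
    and fine: "3 * real CARD('d) < real N * \<eta>"
  shows "h 0 (cell_center N y) = real N ^ CARD('d) * integral (cell N y) h0"
proof (cases "y \<in> DN N D")
  case False
  have "h0 \<theta> = 0" if \<theta>: "\<theta> \<in> cell N y" for \<theta>
  proof -
    obtain q where q: "q \<notin> D" "dist \<theta> q \<le> 3 * real CARD('d) / real N"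
      using cell_outside_DN_near_complement[OF N_ge_1 y False \<theta>] by blast
    moreover have "3 * real CARD('d) / real N < \<eta>"
      using fine N_ge_1 by (simp add: divide_simps mult.commute)
    ultimately show ?thesis using \<eta> by fastforce
  qed
  then have "integral (cell N y) h0 = integral (cell N y) (\<lambda>_. 0)"
    by (intro integral_cong) auto
  then show ?thesis using initial_value[OF y] False by simp
qed (use initial_value[OF y] in simp)

lemma abs_nablaN_i_initial_le_lipschitz:
  assumes cont: "continuous_on UNIV h0"
    and lip: "\<forall>x i s. \<bar>h0 (x + s *\<^sub>R axis i 1) - h0 x\<bar> \<le> L * \<bar>s\<bar>"
    and \<eta>: "\<forall>z q. q \<notin> D \<longrightarrow> dist z q < \<eta> \<longrightarrow> h0 z = 0"
    and fine: "3 * real CARD('d) < real N * \<eta>"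
  shows "\<bar>nablaN_i N i (h 0) \<theta>\<bar> \<le> L"
proof -
  define p where "p = cell_index N \<theta>"
  define a where "a = (1 / real N) *\<^sub>R axis i (1::real)"
  define l where "l = 1 / real N"
  define lo where "lo = cell_center N p - (l/2) *\<^sub>R (1::real^'d)"
  define hi where "hi = cell_center N p + (l/2) *\<^sub>R (1::real^'d)"
  have l: "l > 0" using N_ge_1 by (simp add: l_def)
  have p: "p \<in> lattice" by (simp add: p_def cell_index_in_lattice)
  have "nablaN_i N i (h 0) \<theta> = real N * real N ^ CARD('d) *
      (integral (cell N (p + axis i 1)) h0 - integral (cell N p) h0)"
    using nablaN_i_solution[of 0 i \<theta>] initial_value_eq_cell_average[OF lattice_add_axis[OF p] \<eta> fine]
      initial_value_eq_cell_average[OF p \<eta> fine]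
    by (simp add: p_def[symmetric] algebra_simps)
  also have "integral (cell N (p + axis i 1)) h0 - integral (cell N p) h0
      = integral (cbox (lo + a) (hi + a)) h0 - integral (cbox lo hi) h0"
    using integral_cube_eq_cbox[OF cont l, of "cell_center N p + a"] integral_cube_eq_cbox[OF cont l]
    by (simp add: lo_def hi_def a_def l_def cell_center_add_axis algebra_simps)
  finally have "\<bar>nablaN_i N i (h 0) \<theta>\<bar>
      = real N * real N ^ CARD('d) * \<bar>integral (cbox (lo + a) (hi + a)) h0 - integral (cbox lo hi) h0\<bar>"
    by (simp add: abs_mult)
  also have "\<dots> \<le> real N * real N ^ CARD('d) * ((L * l) * measure lborel (cbox lo hi))"
    using lip[rule_format, where i=i and s=l] l
    by (intro mult_left_mono abs_integral_cbox_shift_diff_le[OF cont]) (simp_all add: a_def l_def add.commute)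
  also have "measure lborel (cbox lo hi) = l ^ CARD('d)"
    using measure_cube_cbox[OF l] by (simp add: lo_def hi_def)
  also have "real N * real N ^ CARD('d) * ((L * l) * l ^ CARD('d)) = L"
    using N_ge_1 by (simp add: l_def power_one_over field_simps)
  finally show ?thesis .
qed

end

section \<open>Energy dissipation\<close>

locale energy_flow = discrete_flow V \<rho> \<delta> D h0 N h
  for V \<rho> and \<delta> D h0 N and h :: "real \<Rightarrow> real^'d \<Rightarrow> real" +
  assumes sigma_delta_deriv:
      "\<And>v. (sigma_delta V \<rho> \<delta> has_derivative (\<lambda>k. grad (sigma_delta V \<rho> \<delta>) v \<bullet> k)) (at v)"
begin

abbreviation (input) G :: "real^'d \<Rightarrow> real^'d" where "G \<equiv> grad (sigma_delta V \<rho> \<delta>)"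

definition bregman :: "real^'d \<Rightarrow> real" where
  "bregman u = sigma_delta V \<rho> \<delta> u - sigma_delta V \<rho> \<delta> 0 - G 0 \<bullet> u"

definition energy :: "real \<Rightarrow> real" where
  "energy t = (\<Sum>x\<in>bond_sites. bregman (site_grad t x))"

definition rate :: "real \<Rightarrow> real^'d \<Rightarrow> real" where
  "rate t y = (if y \<in> DN N D then - LapN N D (kN V \<rho> \<delta> N (h t)) (cell_center N y) else 0)"

definition grad_rate :: "real \<Rightarrow> real^'d \<Rightarrow> real^'d" where
  "grad_rate t x = (\<chi> i. real N * (rate t (x + axis i 1) - rate t x))"

lemma site_value_deriv:
  assumes t: "t \<ge> 0" and y: "y \<in> lattice"
  shows "((\<lambda>s. site_value s y) has_real_derivative rate t y) (at t within {0..})"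
proof (cases "y \<in> DN N D")
  case True
  then have "cell_center N y \<in> tDN N D" using cell_center_mem_tDN_iff[OF N_ge_1 y] by simp
  then show ?thesis using solution t True by (auto simp: discrete_solution_def site_value_def rate_def)
next
  case False
  have "((\<lambda>s. site_value s y) has_real_derivative 0) (at t within {0..})"
    by (rule has_field_derivative_transform_within[OF DERIV_const zero_less_one])
       (use t False solution_eq_0_outside y in \<open>auto simp: site_value_def\<close>)
  then show ?thesis using False by (simp add: rate_def)
qed

lemma site_grad_deriv:
  assumes t: "t \<ge> 0" and x: "x \<in> lattice"
  shows "((\<lambda>s. site_grad s x) has_derivative (\<lambda>r. r *\<^sub>R grad_rate t x)) (at t within {0..})"
proof -
  have "((\<lambda>s. real N * (site_value s (x + axis i 1) - site_value s x)) has_real_derivative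
        real N * (rate t (x + axis i 1) - rate t x)) (at t within {0..})" for i
    by (intro DERIV_cmult DERIV_diff site_value_deriv t x lattice_add_axis)
  then have deriv: "((\<lambda>s. \<Sum>i\<in>UNIV. (real N * (site_value s (x + axis i 1) - site_value s x)) *\<^sub>R axis i 1)
      has_derivative (\<lambda>r. \<Sum>i\<in>UNIV. ((real N * (rate t (x + axis i 1) - rate t x)) * r) *\<^sub>R axis i 1))
      (at t within {0..})"
    by (intro has_derivative_sum has_derivative_scaleR_left) (simp add: has_field_derivative_def)
  have expand: "site_grad s x = (\<Sum>i\<in>UNIV. (real N * (site_value s (x + axis i 1) - site_value s x)) *\<^sub>R axis i 1)"
    for s using basis_expansion[of "site_grad s x"] by (simp add: site_grad_component scalar_mult_eq_scaleR)
  have rate_eq: "(\<lambda>r. \<Sum>i\<in>UNIV. ((real N * (rate t (x + axis i 1) - rate t x)) * r) *\<^sub>R axis i 1)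
      = (\<lambda>r. r *\<^sub>R grad_rate t x)"
  proof
    fix r
    show "(\<Sum>i\<in>UNIV. ((real N * (rate t (x + axis i 1) - rate t x)) * r) *\<^sub>R axis i 1) = r *\<^sub>R grad_rate t x"
      using basis_expansion[of "r *\<^sub>R grad_rate t x"]
      by (simp add: grad_rate_def scalar_mult_eq_scaleR mult.commute)
  qed
  show ?thesis unfolding expand[abs_def] by (rule has_derivative_eq_rhs[OF deriv rate_eq])
qed

lemma energy_deriv:
  assumes t: "t \<ge> 0"
  shows "(energy has_real_derivative (\<Sum>x\<in>bond_sites. (G (site_grad t x) - G 0) \<bullet> grad_rate t x))
    (at t within {0..})"
proof -
  have bregman_deriv: "(bregman has_derivative (\<lambda>k. (G u - G 0) \<bullet> k)) (at u)" for u
  proof -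
    have "(bregman has_derivative (\<lambda>k. G u \<bullet> k - 0 - G 0 \<bullet> k)) (at u)"
      unfolding bregman_def[abs_def] by (intro derivative_intros sigma_delta_deriv)
    then show ?thesis by (simp add: inner_diff_left)
  qed
  have "((\<lambda>s. bregman (site_grad s x)) has_derivative
      (\<lambda>r. (G (site_grad t x) - G 0) \<bullet> (r *\<^sub>R grad_rate t x))) (at t within {0..})"
    if "x \<in> bond_sites" for x
    using has_derivative_compose[OF site_grad_deriv[OF t] bregman_deriv] bond_sites_subset_lattice that
    by blast
  then have "(energy has_derivative
      (\<lambda>r. \<Sum>x\<in>bond_sites. (G (site_grad t x) - G 0) \<bullet> (r *\<^sub>R grad_rate t x))) (at t within {0..})"
    unfolding energy_def[abs_def] by (rule has_derivative_sum)
  moreover have "(\<lambda>r. \<Sum>x\<in>bond_sites. (G (site_grad t x) - G 0) \<bullet> (r *\<^sub>R grad_rate t x))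
      = (*) (\<Sum>x\<in>bond_sites. (G (site_grad t x) - G 0) \<bullet> grad_rate t x)"
    by (auto simp: sum_distrib_left mult.commute)
  ultimately show ?thesis by (simp add: has_field_derivative_def)
qed

lemma kN_cell_center:
  "kN V \<rho> \<delta> N (h t) (cell_center N y)
    = (\<Sum>i\<in>UNIV. real N * (G (site_grad t y) $ i - G (site_grad t (y - axis i 1)) $ i))"
  by (simp add: kN_def divN_def nablaN_star_i_def site_grad_def cell_center_diff_axis sum_negf[symmetric])

lemma summation_by_parts:
  "(\<Sum>x\<in>bond_sites. (G (site_grad t x) - G 0) \<bullet> grad_rate t x)
    = - (\<Sum>y\<in>DN N D. rate t y * kN V \<rho> \<delta> N (h t) (cell_center N y))"
proof -
  define u where "u x = G (site_grad t x) - G 0" for x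
  have fin: "finite (DN N D)" using finite_DN[OF bounded_D] .
  have shifted: "(\<Sum>x\<in>bond_sites. u x $ i * rate t (x + axis i 1))
      = (\<Sum>y\<in>DN N D. u (y - axis i 1) $ i * rate t y)" for i
  proof -
    have "(\<Sum>x\<in>bond_sites. u x $ i * rate t (x + axis i 1))
        = (\<Sum>y\<in>(\<lambda>x. x + axis i 1) ` bond_sites. u (y - axis i 1) $ i * rate t y)"
      by (subst sum.reindex) (auto simp: inj_on_def)
    also have "\<dots> = (\<Sum>y\<in>DN N D. u (y - axis i 1) $ i * rate t y)"
    proof (rule sum.mono_neutral_cong)
      show "u (y - axis i 1) $ i * rate t y = 0" if "y \<in> (\<lambda>x. x + axis i 1) ` bond_sites - DN N D" for y
        using that by (simp add: rate_def)
      show "u (y - axis i 1) $ i * rate t y = 0" if "y \<in> DN N D - (\<lambda>x. x + axis i 1) ` bond_sites" for y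
      proof -
        have "y - axis i 1 \<in> bond_sites" using that by (auto simp: bond_sites_def)
        then show ?thesis using that by (metis DiffE diff_add_cancel image_eqI)
      qed
    qed (use finite_bond_sites fin in auto)
    finally show ?thesis .
  qed
  have unshifted: "(\<Sum>x\<in>bond_sites. u x $ i * rate t x) = (\<Sum>y\<in>DN N D. u y $ i * rate t y)" for i
    by (rule sum.mono_neutral_cong) (use finite_bond_sites fin in \<open>auto simp: bond_sites_def rate_def\<close>)
  have "(\<Sum>x\<in>bond_sites. (G (site_grad t x) - G 0) \<bullet> grad_rate t x)
      = (\<Sum>i\<in>UNIV. real N * ((\<Sum>x\<in>bond_sites. u x $ i * rate t (x + axis i 1))
          - (\<Sum>x\<in>bond_sites. u x $ i * rate t x)))"
    by (simp add: u_def grad_rate_def inner_vec_def sum.swap[of _ bond_sites] sum_distrib_left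
        sum_subtractf[symmetric] algebra_simps)
  also have "\<dots> = (\<Sum>i\<in>UNIV. real N * ((\<Sum>y\<in>DN N D. u (y - axis i 1) $ i * rate t y)
          - (\<Sum>y\<in>DN N D. u y $ i * rate t y)))"
    by (simp add: shifted unshifted)
  also have "\<dots> = - (\<Sum>y\<in>DN N D. rate t y * (\<Sum>i\<in>UNIV. real N * (G (site_grad t y) $ i - G (site_grad t (y - axis i 1)) $ i)))"
    by (simp add: sum.swap[of _ "DN N D"] sum_distrib_left sum_subtractf[symmetric]
        algebra_simps u_def sum_negf[symmetric])
  finally show ?thesis by (simp add: kN_cell_center)
qed

lemma energy_deriv_nonpos: "(\<Sum>x\<in>bond_sites. (G (site_grad t x) - G 0) \<bullet> grad_rate t x) \<le> 0"
proof -
  have "(\<Sum>x\<in>bond_sites. (G (site_grad t x) - G 0) \<bullet> grad_rate t x)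
      = (\<Sum>y\<in>DN N D. kN V \<rho> \<delta> N (h t) (cell_center N y) * LapN N D (kN V \<rho> \<delta> N (h t)) (cell_center N y))"
    unfolding summation_by_parts by (simp add: rate_def sum_negf[symmetric] mult.commute)
  also have "\<dots> \<le> 0" by (rule sum_mult_LapN_nonpos[OF N_ge_1 finite_DN[OF bounded_D]])
  finally show ?thesis .
qed

lemma energy_decreasing:
  assumes t: "t \<ge> 0"
  shows "energy t \<le> energy 0"
proof -
  have "- energy 0 \<le> - energy t"
  proof (rule DERIV_nonneg_imp_increasing_open[of 0 t "\<lambda>s. - energy s"])
    fix s :: real assume s: "0 < s" "s < t"
    then have "at s within {0..} = at s" by (intro at_within_interior) auto
    then have "(energy has_real_derivative (\<Sum>x\<in>bond_sites. (G (site_grad s x) - G 0) \<bullet> grad_rate s x)) (at s)"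
      using energy_deriv[of s] s by simp
    then show "\<exists>y. ((\<lambda>s. - energy s) has_real_derivative y) (at s) \<and> 0 \<le> y"
      using energy_deriv_nonpos[of s] by (intro exI conjI) (rule DERIV_minus, auto)
  next
    have "continuous (at s within {0..}) energy" if "s \<in> {0..t}" for s
      using energy_deriv[of s] that by (auto intro: DERIV_continuous)
    then show "continuous_on {0..t} (\<lambda>s. - energy s)"
      unfolding continuous_on_eq_continuous_within
      by (intro ballI continuous_intros) (meson atLeastAtMost_iff atLeast_iff continuous_within_subset subsetI)
  qed (use t in auto)
  then show ?thesis by simp
qed

lemma gradient_energy_le_initial:
  assumes t: "t \<ge> 0" and cm: "cm > 0"
    and bounds: "\<And>u. cm/2 * (norm u)\<^sup>2 \<le> bregman u \<and> bregman u \<le> cp/2 * (norm u)\<^sup>2"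
  shows "integral D (\<lambda>\<theta>. (norm (nablaN N (h t) \<theta>))\<^sup>2)
      \<le> (cp/cm) * integral UNIV (\<lambda>\<theta>. (norm (nablaN N (h 0) \<theta>))\<^sup>2)"
proof -
  define S where "S s = (\<Sum>x\<in>bond_sites. (norm (site_grad s x))\<^sup>2)" for s
  have "cm/2 * S t \<le> energy t"
    unfolding S_def energy_def sum_distrib_left using bounds by (intro sum_mono) auto
  also have "\<dots> \<le> energy 0" by (rule energy_decreasing[OF t])
  also have "\<dots> \<le> cp/2 * S 0"
    unfolding S_def energy_def sum_distrib_left using bounds by (intro sum_mono) auto
  finally have S_le: "S t \<le> (cp/cm) * S 0" using cm by (simp add: field_simps)
  let ?f = "\<lambda>\<theta>. (norm (nablaN N (h t) \<theta>))\<^sup>2"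
  have int_t: "(?f has_integral S t / real N ^ CARD('d)) UNIV"
    unfolding S_def by (rule has_integral_norm_nablaN_sq[OF t])
  have "integral D ?f \<le> integral UNIV ?f"
  proof (cases "?f integrable_on D")
    case True
    then show ?thesis using int_t by (intro integral_subset_le) auto
  next
    case False
    have "0 \<le> integral UNIV ?f" using int_t by (intro integral_nonneg) auto
    then show ?thesis using False by (simp add: not_integrable_integral)
  qed
  also have "\<dots> = S t / real N ^ CARD('d)" using int_t by (rule integral_unique)
  also have "\<dots> \<le> (cp/cm) * S 0 / real N ^ CARD('d)"
    using S_le by (intro divide_right_mono) simp_all
  also have "\<dots> = (cp/cm) * integral UNIV (\<lambda>\<theta>. (norm (nablaN N (h 0) \<theta>))\<^sup>2)"
    using integral_unique[OF has_integral_norm_nablaN_sq[of 0]] by (simp add: S_def)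
  finally show ?thesis .
qed

end

section \<open>Uniform bounds\<close>

text \<open>The initial discrete gradient is bounded uniformly in \<open>N\<close>: by the Lipschitz constant of
  \<open>h\<^sub>0\<close> along the axes once the mesh is fine, and crudely by \<open>2 N sup|h\<^sub>0|\<close> for the finitely
  many coarse meshes.\<close>
lemma initial_nablaN_bounded:
  fixes D :: "(real^'d) set" and h0 :: "real^'d \<Rightarrow> real"
  assumes D: "open D" "bounded D"
    and h0_smooth: "smooth_fun h0"
    and h0_supp: "compact (closure {x. h0 x \<noteq> 0})" "closure {x. h0 x \<noteq> 0} \<subseteq> D"
  shows "\<exists>L. \<forall>N\<ge>1. \<forall>h. discrete_solution V \<rho> \<delta> D h0 N h \<longrightarrow> (\<forall>i \<theta>. \<bar>nablaN_i N i (h 0) \<theta>\<bar> \<le> L)"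
proof -
  have cont: "continuous_on UNIV h0" by (rule smooth_fun_continuous[OF h0_smooth])
  obtain M0 where M0: "M0 \<ge> 0" "\<forall>x. \<bar>h0 x\<bar> \<le> M0"
    using bounded_vanishing_outside_compact[OF cont h0_supp(1)] not_in_closure_support_eq_0 by blast
  obtain L where L: "\<forall>x i s. \<bar>h0 (x + s *\<^sub>R axis i 1) - h0 x\<bar> \<le> L * \<bar>s\<bar>"
    using axis_lipschitz_of_smooth_compact_support[OF h0_smooth h0_supp(1)] by blast
  obtain \<eta> where \<eta>: "\<eta> > 0" "\<forall>x\<in>closure {x. h0 x \<noteq> 0}. \<forall>y\<in>- D. \<eta> \<le> dist x y"
    using separate_compact_closed[OF h0_supp(1), of "- D"] D(1) h0_supp(2) by blast
  have \<eta>_zero: "\<forall>z q. q \<notin> D \<longrightarrow> dist z q < \<eta> \<longrightarrow> h0 z = 0"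
    using \<eta>(2) not_in_closure_support_eq_0 by (metis ComplI not_le)
  obtain N1 :: nat where N1: "3 * real CARD('d) / \<eta> < real N1" using reals_Archimedean2 by blast
  show ?thesis
  proof (intro exI[of _ "max L (2 * real N1 * M0)"] allI impI)
    fix N :: nat and h :: "real \<Rightarrow> real^'d \<Rightarrow> real" and i \<theta>
    assume "N \<ge> 1" "discrete_solution V \<rho> \<delta> D h0 N h"
    then interpret discrete_flow V \<rho> \<delta> D h0 N h using D(2) by unfold_locales
    show "\<bar>nablaN_i N i (h 0) \<theta>\<bar> \<le> max L (2 * real N1 * M0)"
    proof (cases "3 * real CARD('d) < real N * \<eta>")
      case True
      then show ?thesis
        using abs_nablaN_i_initial_le_lipschitz[OF cont L \<eta>_zero, of i \<theta>] by (simp add: le_max_iff_disj)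
    next
      case False
      then have "real N \<le> 3 * real CARD('d) / \<eta>" using \<eta>(1) by (simp add: field_simps)
      then have "real N \<le> real N1" using N1 by simp
      then have "2 * real N * M0 \<le> 2 * real N1 * M0" using M0(1) by (simp add: mult_right_mono)
      then show ?thesis using abs_nablaN_i_initial_le_sup[OF cont M0(2), of i \<theta>] by linarith
    qed
  qed
qed

lemma initial_gradient_energy_bounded:
  fixes D :: "(real^'d) set" and h0 :: "real^'d \<Rightarrow> real"
  assumes D: "open D" "bounded D"
    and h0_smooth: "smooth_fun h0"
    and h0_supp: "compact (closure {x. h0 x \<noteq> 0})" "closure {x. h0 x \<noteq> 0} \<subseteq> D"
  shows "\<exists>B. \<forall>N\<ge>1. \<forall>h. discrete_solution V \<rho> \<delta> D h0 N h \<longrightarrow>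
    integral UNIV (\<lambda>\<theta>. (norm (nablaN N (h 0) \<theta>))\<^sup>2) \<le> B"
proof -
  obtain L where L: "\<forall>N\<ge>1. \<forall>h. discrete_solution V \<rho> \<delta> D h0 N h \<longrightarrow> (\<forall>i \<theta>. \<bar>nablaN_i N i (h 0) \<theta>\<bar> \<le> L)"
    using initial_nablaN_bounded[OF D h0_smooth h0_supp] by blast
  obtain R where R: "\<forall>x\<in>D. norm x \<le> R" using D(2) by (auto simp: bounded_iff)
  define E where "E = cbox (- ((R + 2) *\<^sub>R 1)) ((R + 2) *\<^sub>R (1::real^'d))"
  define c where "c = real CARD('d) * L\<^sup>2"
  have int_E: "((\<lambda>\<theta>. if \<theta> \<in> E then c else 0) has_integral c * measure lborel E) UNIV"
    using has_integral_const[of c "- ((R + 2) *\<^sub>R 1)" "(R + 2) *\<^sub>R (1::real^'d)"]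
    by (simp add: E_def has_integral_restrict_UNIV mult.commute)
  show ?thesis
  proof (intro exI[of _ "c * measure lborel E"] allI impI)
    fix N :: nat and h :: "real \<Rightarrow> real^'d \<Rightarrow> real"
    assume N: "N \<ge> 1" and sol: "discrete_solution V \<rho> \<delta> D h0 N h"
    then interpret discrete_flow V \<rho> \<delta> D h0 N h using D(2) by unfold_locales
    have "(norm (nablaN N (h 0) \<theta>))\<^sup>2 \<le> (if \<theta> \<in> E then c else 0)" for \<theta>
    proof (cases "\<theta> \<in> E")
      case True
      have "(norm (nablaN N (h 0) \<theta>))\<^sup>2 = (\<Sum>i\<in>UNIV. (nablaN_i N i (h 0) \<theta>)\<^sup>2)"
        unfolding power2_norm_eq_inner by (simp add: inner_vec_def nablaN_def power2_eq_square)
      also have "\<dots> \<le> (\<Sum>i\<in>(UNIV::'d set). L\<^sup>2)"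
      proof (rule sum_mono)
        fix i
        have "\<bar>nablaN_i N i (h 0) \<theta>\<bar> \<le> L" using L N sol by blast
        then have "\<bar>nablaN_i N i (h 0) \<theta>\<bar> \<le> \<bar>L\<bar>" by linarith
        then show "(nablaN_i N i (h 0) \<theta>)\<^sup>2 \<le> L\<^sup>2" by (simp add: abs_le_square_iff)
      qed
      finally show ?thesis using True by (simp add: c_def)
    qed (use nablaN_solution_eq_0_far[OF _ R] in \<open>simp add: E_def\<close>)
    then show "integral UNIV (\<lambda>\<theta>. (norm (nablaN N (h 0) \<theta>))\<^sup>2) \<le> c * measure lborel E"
      using integral_le[OF has_integral_integrable[OF has_integral_norm_nablaN_sq] has_integral_integrable[OF int_E]]
        integral_unique[OF int_E] by simp
  qed
qed

theorem proposition3p8: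
  fixes D :: "(real^'d) set"
    and V :: "real \<Rightarrow> real" and V' V'' :: "real \<Rightarrow> real"
    and c_minus c_plus :: real
    and \<rho> h0 :: "real^'d \<Rightarrow> real"
    and \<delta> T :: real
  assumes D: "admissible_domain D"
    and V_C2: "\<forall>x. (V has_real_derivative V' x) (at x) \<and> (V' has_real_derivative V'' x) (at x)"
    and V''_cont: "continuous_on UNIV V''"
    and V_even: "\<forall>x. V (- x) = V x"
    and c_pos: "0 < c_minus" "0 < c_plus"
    and V''_bounds: "\<forall>x. c_minus \<le> V'' x \<and> V'' x \<le> c_plus"
    and sigma_C1: "\<forall>u::real^'d. surface_tension V differentiable (at u)"
      "continuous_on UNIV (grad (surface_tension V :: real^'d \<Rightarrow> real))"
    and sigma_convex: "\<forall>u v :: real^'d. c_minus * (norm (u - v))\<^sup>2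
          \<le> (grad (surface_tension V) u - grad (surface_tension V) v) \<bullet> (u - v)
        \<and> (grad (surface_tension V) u - grad (surface_tension V) v) \<bullet> (u - v)
          \<le> c_plus * (norm (u - v))\<^sup>2"
    and rho_smooth: "smooth_fun \<rho>"
    and rho_nonneg: "\<forall>v. 0 \<le> \<rho> v"
    and rho_sym: "\<forall>v. \<rho> (- v) = \<rho> v"
    and rho_supp: "closure {v. \<rho> v \<noteq> 0} \<subseteq> cball 0 1"
    and rho_int: "integral UNIV \<rho> = 1"
    and delta: "0 < \<delta>" "\<delta> \<le> 1"
    and h0_smooth: "smooth_fun h0"
    and h0_supp: "compact (closure {x. h0 x \<noteq> 0})" "closure {x. h0 x \<noteq> 0} \<subseteq> D"
    and T: "0 < T"
  shows "\<exists>B. \<forall>N\<ge>1. \<forall>h. discrete_solution V \<rho> \<delta> D h0 N h \<longrightarrow>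
           (\<forall>t\<in>{0..T}. integral D (\<lambda>\<theta>. (norm (nablaN N (h t) \<theta>))\<^sup>2) \<le> B)"
proof -
  have D': "open D" "bounded D" using D by (simp_all add: admissible_domain_def)
  obtain B0 where B0: "\<forall>N\<ge>1. \<forall>h. discrete_solution V \<rho> \<delta> D h0 N h \<longrightarrow>
      integral UNIV (\<lambda>\<theta>. (norm (nablaN N (h 0) \<theta>))\<^sup>2) \<le> B0"
    using initial_gradient_energy_bounded[OF D' h0_smooth h0_supp] by blast
  note mollified = sigma_C1 sigma_convex smooth_fun_continuous[OF rho_smooth]
    rho_nonneg rho_supp rho_int delta
  show ?thesis
  proof (intro exI[of _ "(c_plus / c_minus) * B0"] allI impI ballI)
    fix N :: nat and h :: "real \<Rightarrow> real^'d \<Rightarrow> real" and t :: real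
    assume N: "N \<ge> 1" and sol: "discrete_solution V \<rho> \<delta> D h0 N h" and t: "t \<in> {0..T}"
    interpret energy_flow V \<rho> \<delta> D h0 N h
      using N D'(2) sol sigma_delta_has_derivative[OF mollified] by unfold_locales
    have "integral D (\<lambda>\<theta>. (norm (nablaN N (h t) \<theta>))\<^sup>2)
        \<le> (c_plus / c_minus) * integral UNIV (\<lambda>\<theta>. (norm (nablaN N (h 0) \<theta>))\<^sup>2)"
      using t c_pos(1) sigma_delta_bregman_bounds[OF mollified]
      by (intro gradient_energy_le_initial) (auto simp: bregman_def)
    also have "\<dots> \<le> (c_plus / c_minus) * B0"
      using B0 N sol c_pos by (intro mult_left_mono) auto
    finally show "integral D (\<lambda>\<theta>. (norm (nablaN N (h t) \<theta>))\<^sup>2) \<le> (c_plus / c_minus) * B0" .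
  qed
qed

end
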